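(* Let $\varphi\colon A\to\mathcal{B}(X)$ be a representation (bounded linear multiplicative map) of a Banach algebra $A$ on a Banach space $X$, and set $\tilde{\varphi}=\alpha_X\circ\varphi^{**}\colon A^{**}\to\mathcal{B}(X,X^{**})$. Then the image of $\tilde{\varphi}$ is contained in $\gamma_X(\mathcal{B}(X))$ if and only if for every $x\in X$ the orbit map $\mathrm{ev}_x\circ\varphi\colon A\to X$, $a\mapsto \varphi(a)x$, is weakly compact. Moreover, if this is the case, then, regarding $\tilde{\varphi}$ as a map $A^{**}\to\mathcal{B}(X)$: (1) the essential spaces of $\varphi$ and $\tilde{\varphi}$ agree; (2) $\tilde{\varphi}$ is multiplicative with respect to both the left and the right Arens product on $A^{**}$; (3) $\tilde{\varphi}\circ\kappa_A=\varphi$.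
   Context: For a Banach space $E$, $\kappa_E\colon E\to E^{**}$ is the canonical embedding. The left Arens product $\square$ and right Arens product $\diamond$ on $A^{**}$ are defined by $S\square T=\text{weak*-}\lim_i\text{weak*-}\lim_j\kappa_A(a_ib_j)$ and $S\diamond T=\text{weak*-}\lim_j\text{weak*-}\lim_i\kappa_A(a_ib_j)$ for bounded nets $(a_i),(b_j)$ in $A$ with $\kappa_A(a_i)\to S$, $\kappa_A(b_j)\to T$ weak*. $\mathcal{B}(X,X^{**})$ is a unital Banach algebra with product $ab=\kappa_{X^*}^*\circ a^{**}\circ b$. $\gamma_X\colon\mathcal{B}(X)\to\mathcal{B}(X,X^{**})$ is $\gamma_X(a)=\kappa_X\circ a$, an isometric multiplicative map, through which $\mathcal{B}(X)$ is regarded as a subalgebra of $\mathcal{B}(X,X^{**})$. For $x\in X$, $\mathrm{ev}_x\colon\mathcal{B}(X)\to X$ is $\mathrm{ev}_x(a)=a(x)$, and $\alpha_X\colon\mathcal{B}(X)^{**}\to\mathcal{B}(X,X^{**})$ is defined by $\alpha_X(S)(x)=\mathrm{ev}_x^{**}(S)$. The essential space of a representation $\psi$ of an algebra $B$ on $X$ is the closed linear span $X_\psi$ of $\{\psi(b)x: b\in B, x\in X\}$. *)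

theory Defs
  imports "HOL-Analysis.Analysis"
begin

type_synonym 'e bidual = "('e \<Rightarrow>\<^sub>L real) \<Rightarrow>\<^sub>L real"

definition kappa :: "'e::real_normed_vector \<Rightarrow> 'e bidual" where
  "kappa x = Blinfun (\<lambda>f. blinfun_apply f x)"

definition adj :: "('e::real_normed_vector \<Rightarrow>\<^sub>L 'f::real_normed_vector)
    \<Rightarrow> ('f \<Rightarrow>\<^sub>L real) \<Rightarrow>\<^sub>L ('e \<Rightarrow>\<^sub>L real)" where
  "adj T = Blinfun (\<lambda>g. g o\<^sub>L T)"

definition biadj :: "('e::real_normed_vector \<Rightarrow>\<^sub>L 'f::real_normed_vector)
    \<Rightarrow> 'e bidual \<Rightarrow>\<^sub>L 'f bidual" where
  "biadj T = adj (adj T)"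

definition ev :: "'x::real_normed_vector \<Rightarrow> ('x \<Rightarrow>\<^sub>L 'x) \<Rightarrow>\<^sub>L 'x" where
  "ev x = Blinfun (\<lambda>a. blinfun_apply a x)"

definition alpha :: "('x::real_normed_vector \<Rightarrow>\<^sub>L 'x) bidual \<Rightarrow> 'x \<Rightarrow> 'x bidual" where
  "alpha S = (\<lambda>x. blinfun_apply (biadj (ev x)) S)"

definition gamma :: "('x::real_normed_vector \<Rightarrow>\<^sub>L 'x) \<Rightarrow> 'x \<Rightarrow> 'x bidual" where
  "gamma a = (\<lambda>x. kappa (blinfun_apply a x))"

definition phitilde :: "('a::real_normed_vector \<Rightarrow>\<^sub>L ('x::real_normed_vector \<Rightarrow>\<^sub>L 'x))
    \<Rightarrow> 'a bidual \<Rightarrow> 'x \<Rightarrow> 'x bidual" where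
  "phitilde \<phi> S = alpha (blinfun_apply (biadj \<phi>) S)"

text \<open>phi tilde regarded as a map into B(X) (meaningful when its image lies in gamma_X(B(X))).\<close>
definition phihat :: "('a::real_normed_vector \<Rightarrow>\<^sub>L ('x::real_normed_vector \<Rightarrow>\<^sub>L 'x))
    \<Rightarrow> 'a bidual \<Rightarrow> ('x \<Rightarrow>\<^sub>L 'x)" where
  "phihat \<phi> S = (THE a. phitilde \<phi> S = gamma a)"

definition weak_top :: "'f::real_normed_vector topology" where
  "weak_top = topology_generated_by
     {blinfun_apply f -` U | f U. open (U :: real set)}"

definition wstar_top :: "'e::real_normed_vector bidual topology" where
  "wstar_top = topology_generated_by
     {{\<Phi>. blinfun_apply \<Phi> f \<in> U} | f U. open (U :: real set)}"

definition weakly_compact :: "('e::real_normed_vector \<Rightarrow>\<^sub>L 'f::real_normed_vector) \<Rightarrow> bool" where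
  "weakly_compact T \<longleftrightarrow>
     compactin weak_top (weak_top closure_of (blinfun_apply T ` cball 0 1))"

text \<open>Nets in A are represented by (the image filters on A of) nets; a bounded net
  (a_i) with kappa(a_i) \<rightarrow> S weak*.\<close>
definition bnd_net :: "'a::real_normed_vector filter \<Rightarrow> 'a bidual \<Rightarrow> bool" where
  "bnd_net F S \<longleftrightarrow> F \<noteq> bot \<and> (\<exists>B. bounded B \<and> eventually (\<lambda>a. a \<in> B) F)
     \<and> limitin wstar_top kappa S F"

definition wlim :: "'b filter \<Rightarrow> ('b \<Rightarrow> 'e::real_normed_vector bidual) \<Rightarrow> 'e bidual" where
  "wlim F h = (THE R. limitin wstar_top h R F)"

definition arens_left :: "'a::real_normed_algebra bidual \<Rightarrow> 'a bidual \<Rightarrow> 'a bidual" where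
  "arens_left S T = (THE R. \<forall>F G. bnd_net F S \<and> bnd_net G T \<longrightarrow>
      limitin wstar_top (\<lambda>a. wlim G (\<lambda>b. kappa (a * b))) R F)"

definition arens_right :: "'a::real_normed_algebra bidual \<Rightarrow> 'a bidual \<Rightarrow> 'a bidual" where
  "arens_right S T = (THE R. \<forall>F G. bnd_net F S \<and> bnd_net G T \<longrightarrow>
      limitin wstar_top (\<lambda>b. wlim F (\<lambda>a. kappa (a * b))) R G)"

definition ess_space :: "('b \<Rightarrow> ('x::real_normed_vector \<Rightarrow>\<^sub>L 'x)) \<Rightarrow> 'x set" where
  "ess_space \<psi> = closure (span {blinfun_apply (\<psi> b) x | b x. True})"

end

theory Submission
  imports Defs
begin

text \<open>
  Since \<open>phitilde \<phi> S x = (ev x \<circ> \<phi>)\<^sup>*\<^sup>* S\<close>, the image of \<open>phitilde \<phi>\<close> lies in \<open>\<gamma>\<^sub>X(B(X))\<close> exactly when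
  every second adjoint \<open>(ev x \<circ> \<phi>)\<^sup>*\<^sup>*\<close> takes values in \<open>\<kappa>\<^sub>X(X)\<close>, and by Gantmacher's theorem this
  is weak compactness of the orbit maps. Gantmacher's theorem rests on Banach--Alaoglu (obtained
  from Tychonoff's theorem), on a quantitative Goldstine theorem and on the Hahn--Banach theorem
  (obtained from Zorn's lemma).

  Once \<open>phitilde \<phi>\<close> takes values in \<open>B(X)\<close>, everything is governed by the identity
  \<open>S (g \<circ> ev x \<circ> \<phi>) = g (phihat \<phi> S x)\<close>. Goldstine's theorem gives the Arens products the
  explicit forms \<open>f \<mapsto> S (T \<cdot> f)\<close> and \<open>f \<mapsto> T (f \<cdot> S)\<close>, from which multiplicativity follows using
  \<open>\<phi> (a b) = \<phi> a \<circ> \<phi> b\<close>; and a Hahn--Banach separation argument shows that every \<open>phihat \<phi> S\<close>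
  maps into the essential space of \<open>\<phi>\<close>.
\<close>

lemma blinfun_compose_assoc: "(a o\<^sub>L b) o\<^sub>L c = a o\<^sub>L (b o\<^sub>L c)"
  by (rule blinfun_eqI) simp

lemma kappa_apply [simp]: "blinfun_apply (kappa x) f = blinfun_apply f x"
  unfolding kappa_def by (simp add: bounded_linear_Blinfun_apply)

lemma adj_apply [simp]: "blinfun_apply (adj T) g = g o\<^sub>L T"
  unfolding adj_def
  by (simp add: bounded_linear_Blinfun_apply
      bounded_bilinear.bounded_linear_left[OF bounded_bilinear_blinfun_compose])

lemma biadj_apply [simp]: "blinfun_apply (blinfun_apply (biadj T) S) g = blinfun_apply S (g o\<^sub>L T)"
  unfolding biadj_def by simp

lemma ev_apply [simp]: "blinfun_apply (ev x) a = blinfun_apply a x"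
  unfolding ev_def by (simp add: bounded_linear_Blinfun_apply)

lemma gamma_apply [simp]: "blinfun_apply (gamma c x) g = blinfun_apply g (blinfun_apply c x)"
  by (simp add: gamma_def)

lemma phitilde_eq_biadj: "phitilde \<phi> S x = blinfun_apply (biadj (ev x o\<^sub>L \<phi>)) S"
  unfolding phitilde_def alpha_def by (rule blinfun_eqI) (simp add: blinfun_compose_assoc)

lemma phitilde_apply:
  "blinfun_apply (phitilde \<phi> S x) g = blinfun_apply S (g o\<^sub>L (ev x o\<^sub>L \<phi>))"
  by (simp add: phitilde_eq_biadj)

lemma biadj_kappa: "blinfun_apply (biadj T) (kappa a) = kappa (blinfun_apply T a)"
  by (rule blinfun_eqI) simp

lemma phitilde_kappa: "phitilde \<phi> (kappa a) = gamma (blinfun_apply \<phi> a)"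
  by (rule ext, rule blinfun_eqI) (simp add: phitilde_apply)

lemma kappa_add: "kappa (x + y) = kappa x + kappa y"
  by (rule blinfun_eqI) (simp add: blinfun.add_left blinfun.add_right)

lemma kappa_scaleR: "kappa (r *\<^sub>R x) = r *\<^sub>R kappa x"
  by (rule blinfun_eqI) (simp add: blinfun.scaleR_left blinfun.scaleR_right)

lemma kappa_zero [simp]: "kappa 0 = 0"
  by (rule blinfun_eqI) simp

lemma norm_kappa_le: "norm (kappa x) \<le> norm x"
  by (rule norm_blinfun_bound) (simp_all add: norm_blinfun[THEN order_trans] mult.commute flip: real_norm_def)

lemma norm_ev_le: "norm (ev x) \<le> norm x"
  by (rule norm_blinfun_bound) (simp_all add: norm_blinfun[THEN order_trans] mult.commute)

lemma norm_biadj_apply_le: "norm (blinfun_apply (biadj T) S) \<le> norm S * norm T"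
proof (rule norm_blinfun_bound)
  fix g
  have "norm (blinfun_apply S (g o\<^sub>L T)) \<le> norm S * norm (g o\<^sub>L T)" by (rule norm_blinfun)
  also have "\<dots> \<le> norm S * (norm g * norm T)" by (intro mult_left_mono norm_blinfun_compose) simp
  finally show "norm (blinfun_apply (blinfun_apply (biadj T) S) g) \<le> norm S * norm T * norm g"
    by (simp add: algebra_simps)
qed simp

lemma bounded_linear_phitilde:
  fixes \<phi> :: "'a::real_normed_vector \<Rightarrow>\<^sub>L ('x::real_normed_vector \<Rightarrow>\<^sub>L 'x)"
  shows "bounded_linear (phitilde \<phi> S)"
proof (rule bounded_linear_intro[where K = "norm S * norm \<phi>"])
  fix x y :: 'x and r :: real
  have "g o\<^sub>L (ev (x + y) o\<^sub>L \<phi>) = (g o\<^sub>L (ev x o\<^sub>L \<phi>)) + (g o\<^sub>L (ev y o\<^sub>L \<phi>))" for g :: "'x \<Rightarrow>\<^sub>L real"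
    by (rule blinfun_eqI) (simp add: blinfun.add_left blinfun.add_right)
  then show "phitilde \<phi> S (x + y) = phitilde \<phi> S x + phitilde \<phi> S y"
    by (intro blinfun_eqI) (simp add: phitilde_apply blinfun.add_left blinfun.add_right)
  have "g o\<^sub>L (ev (r *\<^sub>R x) o\<^sub>L \<phi>) = r *\<^sub>R (g o\<^sub>L (ev x o\<^sub>L \<phi>))" for g :: "'x \<Rightarrow>\<^sub>L real"
    by (rule blinfun_eqI) (simp add: blinfun.scaleR_left blinfun.scaleR_right)
  then show "phitilde \<phi> S (r *\<^sub>R x) = r *\<^sub>R phitilde \<phi> S x"
    by (intro blinfun_eqI) (simp add: phitilde_apply blinfun.scaleR_left blinfun.scaleR_right)
  have "norm (phitilde \<phi> S x) \<le> norm S * norm (ev x o\<^sub>L \<phi>)"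
    unfolding phitilde_eq_biadj by (rule norm_biadj_apply_le)
  also have "\<dots> \<le> norm S * (norm x * norm \<phi>)"
    using norm_blinfun_compose[of "ev x" \<phi>] norm_ev_le[of x]
    by (intro mult_left_mono) (auto intro: order_trans mult_right_mono norm_ge_zero)
  finally show "norm (phitilde \<phi> S x) \<le> norm x * (norm S * norm \<phi>)" by (simp add: algebra_simps)
qed

definition init_topology :: "('a \<Rightarrow> real) set \<Rightarrow> 'a topology" where
  "init_topology H = topology_generated_by {h -` U | h U. h \<in> H \<and> open U}"

lemma topspace_init_topology[simp]: "H \<noteq> {} \<Longrightarrow> topspace (init_topology H) = UNIV"
  unfolding init_topology_def by auto

lemma openin_init_topology_vimage: "h \<in> H \<Longrightarrow> open U \<Longrightarrow> openin (init_topology H) (h -` U)"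
  unfolding init_topology_def by (rule topology_generated_by_Basis) auto

lemma continuous_map_init_topology:
  assumes "h \<in> H" shows "continuous_map (init_topology H) euclideanreal h"
proof -
  have "H \<noteq> {}" using assms by blast
  then have "topspace (init_topology H) = UNIV" by simp
  then show ?thesis
    using openin_init_topology_vimage[OF assms] by (simp add: continuous_map_def vimage_def)
qed

lemma continuous_map_into_init_topology:
  assumes "H \<noteq> {}" "\<And>h. h \<in> H \<Longrightarrow> continuous_map X euclideanreal (\<lambda>x. h (g x))"
  shows "continuous_map X (init_topology H) g"
  unfolding init_topology_def
proof (rule continuous_on_generated_topo)
  fix V assume "V \<in> {h -` U | h U. h \<in> H \<and> open U}"
  then obtain h U where "V = h -` U" "h \<in> H" "open U" by auto
  then have "openin X {x \<in> topspace X. h (g x) \<in> U}"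
    using assms(2) openin_continuous_map_preimage by (metis open_openin)
  moreover have "g -` V \<inter> topspace X = {x \<in> topspace X. h (g x) \<in> U}" using \<open>V = _\<close> by auto
  ultimately show "openin X (g -` V \<inter> topspace X)" by simp
next
  obtain h0 where "h0 \<in> H" using assms(1) by blast
  then have "UNIV \<in> {h -` U | h U. h \<in> H \<and> open U}"
    by (intro CollectI exI[of _ h0] exI[of _ UNIV]) simp
  from Union_upper[OF this]
  show "g ` topspace X \<subseteq> \<Union> {h -` U | h U. h \<in> H \<and> open U}" by (rule subset_trans[rotated]) simp
qed

lemma init_topology_basic_nbhd:
  assumes "openin (init_topology H) W" "l \<in> W"
  shows "\<exists>Fs e. finite Fs \<and> Fs \<subseteq> H \<and> e > 0 \<and> {z. \<forall>h\<in>Fs. \<bar>h z - h l\<bar> < e} \<subseteq> W"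
proof -
  have "generate_topology_on {h -` U | h U. h \<in> H \<and> open U} W"
    using assms(1) unfolding init_topology_def by (rule openin_topology_generated_by)
  then show ?thesis using assms(2)
  proof (induction arbitrary: l)
    case Empty then show ?case by simp
  next
    case (Int a b)
    from Int.prems have la: "l \<in> a" and lb: "l \<in> b" by auto
    obtain F1 e1 where 1: "finite F1" "F1 \<subseteq> H" "e1 > 0" "{z. \<forall>h\<in>F1. \<bar>h z - h l\<bar> < e1} \<subseteq> a"
      using Int.IH(1)[OF la] by blast
    obtain F2 e2 where 2: "finite F2" "F2 \<subseteq> H" "e2 > 0" "{z. \<forall>h\<in>F2. \<bar>h z - h l\<bar> < e2} \<subseteq> b"
      using Int.IH(2)[OF lb] by blast
    have "{z. \<forall>h\<in>F1 \<union> F2. \<bar>h z - h l\<bar> < min e1 e2} \<subseteq> a \<inter> b"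
    proof
      fix z assume z: "z \<in> {z. \<forall>h\<in>F1 \<union> F2. \<bar>h z - h l\<bar> < min e1 e2}"
      have "z \<in> a" using 1(4) z by auto
      moreover have "z \<in> b" using 2(4) z by auto
      ultimately show "z \<in> a \<inter> b" by simp
    qed
    moreover have "finite (F1 \<union> F2)" "F1 \<union> F2 \<subseteq> H" "min e1 e2 > 0" using 1 2 by auto
    ultimately show ?case by blast
  next
    case (UN K)
    then obtain k where "k \<in> K" "l \<in> k" by auto
    with UN.IH[of k l] show ?case by blast
  next
    case (Basis s)
    then obtain h U where s: "s = h -` U" "h \<in> H" "open U" by auto
    then obtain e where "e > 0" "ball (h l) e \<subseteq> U"
      using Basis.prems by (metis open_contains_ball vimage_eq)
    then show ?case using s
      by (intro exI[of _ "{h}"] exI[of _ e]) (auto simp: dist_real_def abs_minus_commute subset_iff)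
  qed
qed

lemma limitin_init_topology_iff:
  assumes "H \<noteq> {}"
  shows "limitin (init_topology H) g l F \<longleftrightarrow> (\<forall>h\<in>H. ((\<lambda>x. h (g x)) \<longlongrightarrow> h l) F)"
proof
  assume L: "limitin (init_topology H) g l F"
  show "\<forall>h\<in>H. ((\<lambda>x. h (g x)) \<longlongrightarrow> h l) F"
  proof (intro ballI tendstoI)
    fix h e assume h: "h \<in> H" and e: "(e::real) > 0"
    have "openin (init_topology H) (h -` ball (h l) e)" by (rule openin_init_topology_vimage[OF h]) simp
    from limitinD[OF L this] e show "\<forall>\<^sub>F x in F. dist (h (g x)) (h l) < e"
      by (simp add: dist_commute)
  qed
next
  assume R: "\<forall>h\<in>H. ((\<lambda>x. h (g x)) \<longlongrightarrow> h l) F"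
  show "limitin (init_topology H) g l F"
    unfolding limitin_def
  proof (intro conjI allI impI)
    show "l \<in> topspace (init_topology H)" using assms by simp
    fix W assume W: "openin (init_topology H) W \<and> l \<in> W"
    then obtain Fs e where Fs: "finite Fs" "Fs \<subseteq> H" "e > 0" "{z. \<forall>h\<in>Fs. \<bar>h z - h l\<bar> < e} \<subseteq> W"
      using init_topology_basic_nbhd[of H W l] by blast
    have "\<forall>\<^sub>F x in F. \<forall>h\<in>Fs. \<bar>h (g x) - h l\<bar> < e"
      using Fs(1,2)
    proof (induction Fs rule: finite_induct)
      case empty then show ?case by simp
    next
      case (insert h Fs)
      then have "((\<lambda>x. h (g x)) \<longlongrightarrow> h l) F" using R by auto
      then have "\<forall>\<^sub>F x in F. dist (h (g x)) (h l) < e" using \<open>e > 0\<close> by (rule tendstoD)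
      with insert show ?case by (auto elim: eventually_elim2 simp: dist_real_def)
    qed
    then show "\<forall>\<^sub>F x in F. g x \<in> W" by (rule eventually_mono) (use Fs(4) in blast)
  qed
qed

lemma Hausdorff_space_init_topology:
  assumes "H \<noteq> {}" "\<And>x y. x \<noteq> y \<Longrightarrow> \<exists>h\<in>H. h x \<noteq> h y"
  shows "Hausdorff_space (init_topology H)"
  unfolding Hausdorff_space_def
proof (intro allI impI)
  fix x y assume "x \<in> topspace (init_topology H) \<and> y \<in> topspace (init_topology H) \<and> x \<noteq> y"
  then obtain h where h: "h \<in> H" "h x \<noteq> h y" using assms(2) by blast
  define e where "e = \<bar>h x - h y\<bar> / 2"
  have "ball (h x) e \<inter> ball (h y) e = {}"
    by (rule disjoint_ballI) (simp add: e_def dist_real_def)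
  then have "disjnt (h -` ball (h x) e) (h -` ball (h y) e)"
    by (auto simp: disjnt_def)
  moreover have "e > 0" using h by (simp add: e_def)
  ultimately show "\<exists>U V. openin (init_topology H) U \<and> openin (init_topology H) V \<and> x \<in> U \<and> y \<in> V \<and> disjnt U V"
    using h(1)
    by (intro exI[of _ "h -` ball (h x) e"] exI[of _ "h -` ball (h y) e"] conjI
        openin_init_topology_vimage) auto
qed

lemma weak_top_eq_init_topology: "weak_top = init_topology (range blinfun_apply)"
  unfolding weak_top_def init_topology_def by (rule arg_cong[where f=topology_generated_by]) auto

lemma wstar_top_eq_init_topology: "wstar_top = init_topology (range (\<lambda>f \<Phi>. blinfun_apply \<Phi> f))"
  unfolding wstar_top_def init_topology_def
proof (rule arg_cong[where f=topology_generated_by], safe)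
  fix f and U :: "real set" assume "open U"
  then show "\<exists>h V. {\<Phi>. blinfun_apply \<Phi> f \<in> U} = h -` V \<and> h \<in> range (\<lambda>f \<Phi>. blinfun_apply \<Phi> f) \<and> open V"
    by (intro exI[of _ "\<lambda>\<Phi>. blinfun_apply \<Phi> f"] exI[of _ U]) auto
qed auto

section \<open>The Hahn--Banach theorem\<close>

text \<open>Partial linear functionals are represented by their graphs, so that Zorn's lemma can be applied
  to the inclusion order.\<close>
definition linear_graph :: "('x::real_vector \<times> real) set \<Rightarrow> bool" where
  "linear_graph G \<longleftrightarrow> (0,0) \<in> G \<and>
    (\<forall>x a b. (x,a) \<in> G \<longrightarrow> (x,b) \<in> G \<longrightarrow> a = b) \<and>
    (\<forall>x a y b. (x,a) \<in> G \<longrightarrow> (y,b) \<in> G \<longrightarrow> (x + y, a + b) \<in> G) \<and>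
    (\<forall>x a t. (x,a) \<in> G \<longrightarrow> (t *\<^sub>R x, t * a) \<in> G)"

definition dominated_graph :: "('x::real_vector \<Rightarrow> real) \<Rightarrow> ('x \<times> real) set \<Rightarrow> ('x \<times> real) set \<Rightarrow> bool"
  where "dominated_graph p G0 G \<longleftrightarrow> G0 \<subseteq> G \<and> linear_graph G \<and> (\<forall>x a. (x,a) \<in> G \<longrightarrow> a \<le> p x)"

lemma linear_graph_Union_chain:
  assumes C: "C \<in> chains {G. linear_graph G}" and ne: "C \<noteq> {}"
  shows "linear_graph (\<Union>C)"
proof -
  have lin: "\<And>G. G \<in> C \<Longrightarrow> linear_graph G" using chainsD2[OF C] by blast
  have common: "\<exists>G\<in>C. u \<in> G \<and> v \<in> G" if uv: "u \<in> \<Union>C" "v \<in> \<Union>C" for u v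
  proof -
    obtain G1 G2 where "G1 \<in> C" "G2 \<in> C" "u \<in> G1" "v \<in> G2" using uv by blast
    then show ?thesis using chainsD[OF C \<open>G1 \<in> C\<close> \<open>G2 \<in> C\<close>] by blast
  qed
  show ?thesis unfolding linear_graph_def
  proof (intro conjI allI impI)
    show "(0,0) \<in> \<Union>C" using lin ne unfolding linear_graph_def by blast
  next
    fix x a b assume "(x,a) \<in> \<Union>C" "(x,b) \<in> \<Union>C"
    then obtain G where "G \<in> C" "(x,a) \<in> G" "(x,b) \<in> G" using common by blast
    then show "a = b" using lin unfolding linear_graph_def by blast
  next
    fix x a y b assume "(x,a) \<in> \<Union>C" "(y,b) \<in> \<Union>C"
    then obtain G where "G \<in> C" "(x,a) \<in> G" "(y,b) \<in> G" using common by blast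
    then show "(x + y, a + b) \<in> \<Union>C" using lin unfolding linear_graph_def by blast
  next
    fix x a t assume "(x,a) \<in> \<Union>C"
    then show "(t *\<^sub>R x, t * a) \<in> \<Union>C" using lin unfolding linear_graph_def by blast
  qed
qed

lemma dominated_graph_Union_chain:
  assumes C: "C \<in> chains {G. dominated_graph p G0 G}" and ne: "C \<noteq> {}"
  shows "dominated_graph p G0 (\<Union>C)"
proof -
  have dom: "\<And>G. G \<in> C \<Longrightarrow> dominated_graph p G0 G" using chainsD2[OF C] by blast
  have "C \<in> chains {G. linear_graph G}"
    using C dom unfolding chains_def chain_subset_def dominated_graph_def by blast
  then have "linear_graph (\<Union>C)" using ne by (rule linear_graph_Union_chain)
  moreover obtain G where "G \<in> C" using ne by blast
  then have "G0 \<subseteq> \<Union>C" using dom unfolding dominated_graph_def by blast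
  moreover have "a \<le> p x" if "(x,a) \<in> \<Union>C" for x a
    using that dom unfolding dominated_graph_def by blast
  ultimately show ?thesis unfolding dominated_graph_def by blast
qed

lemma linear_graph_extend:
  assumes M: "linear_graph M" and x0: "\<And>a. (x0, a) \<notin> M"
  shows "linear_graph {(x + t *\<^sub>R x0, a + t * c) | x a t. (x,a) \<in> M}" (is "linear_graph ?M'")
proof -
  have M0: "(0,0) \<in> M" and Mf: "\<And>x a b. (x,a)\<in>M \<Longrightarrow> (x,b)\<in>M \<Longrightarrow> a = b"
    and Ma: "\<And>x a y b. (x,a)\<in>M \<Longrightarrow> (y,b)\<in>M \<Longrightarrow> (x+y, a+b)\<in>M"
    and Ms: "\<And>x a t. (x,a)\<in>M \<Longrightarrow> (t *\<^sub>R x, t*a)\<in>M"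
    using M unfolding linear_graph_def by blast+
  have uniq: "t = s" if "(x,a)\<in>M" "(y,b)\<in>M" "x + t *\<^sub>R x0 = y + s *\<^sub>R x0" for x a y b t s
  proof (rule ccontr)
    assume ts: "t \<noteq> s"
    have "(y - x, b - a) \<in> M" using Ma[OF that(2) Ms[OF that(1), of "-1"]] by simp
    from Ms[OF this, of "1/(t-s)"] have "((1/(t-s)) *\<^sub>R (y - x), (1/(t-s)) * (b - a)) \<in> M" .
    moreover have "y - x = (t - s) *\<^sub>R x0" using that(3) by (simp add: algebra_simps)
    ultimately have "(x0, (1/(t-s)) * (b - a)) \<in> M" using ts by simp
    then show False using x0 by blast
  qed
  show ?thesis unfolding linear_graph_def
  proof (intro conjI allI impI)
    show "(0,0) \<in> ?M'" using M0 by (intro CollectI exI[of _ 0] exI[of _ 0]) simp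
  next
    fix x a b assume "(x,a) \<in> ?M'" "(x,b) \<in> ?M'"
    then obtain x1 a1 t1 x2 a2 t2 where E: "(x1,a1)\<in>M" "(x2,a2)\<in>M" "x = x1 + t1 *\<^sub>R x0"
      "a = a1 + t1 * c" "x = x2 + t2 *\<^sub>R x0" "b = a2 + t2 * c" by blast
    have "t1 = t2" using uniq[OF E(1,2)] E(3,5) by simp
    with E Mf show "a = b" by auto
  next
    fix x a y b assume "(x,a) \<in> ?M'" "(y,b) \<in> ?M'"
    then obtain x1 a1 t1 x2 a2 t2 where E: "(x1,a1)\<in>M" "(x2,a2)\<in>M" "x = x1 + t1 *\<^sub>R x0"
      "a = a1 + t1 * c" "y = x2 + t2 *\<^sub>R x0" "b = a2 + t2 * c" by blast
    have "x + y = (x1 + x2) + (t1 + t2) *\<^sub>R x0" "a + b = (a1 + a2) + (t1 + t2) * c"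
      using E by (simp_all add: algebra_simps)
    with Ma[OF E(1,2)] show "(x + y, a + b) \<in> ?M'" by blast
  next
    fix x a r assume "(x,a) \<in> ?M'"
    then obtain x1 a1 t1 where E: "(x1,a1)\<in>M" "x = x1 + t1 *\<^sub>R x0" "a = a1 + t1 * c" by blast
    have "r *\<^sub>R x = r *\<^sub>R x1 + (r * t1) *\<^sub>R x0" "r * a = r * a1 + (r * t1) * c"
      using E by (simp_all add: algebra_simps)
    with Ms[OF E(1)] show "(r *\<^sub>R x, r * a) \<in> ?M'" by blast
  qed
qed

lemma linear_graph_subspace_zero:
  assumes "subspace M"
  shows "linear_graph {(m, 0) | m. m \<in> M}"
  using assms unfolding linear_graph_def by (auto simp: subspace_0 subspace_add subspace_scale)

lemma dominated_graph_extension_constant: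
  assumes sub: "\<And>x y. p (x + y) \<le> p x + p y" and good: "dominated_graph p G0 M"
  obtains c where "\<And>y b. (y,b) \<in> M \<Longrightarrow> b - p (y - x0) \<le> c"
    and "\<And>x a. (x,a) \<in> M \<Longrightarrow> c \<le> p (x + x0) - a"
proof -
  have M0: "(0,0) \<in> M"
    and Ma: "\<And>x a y b. (x,a)\<in>M \<Longrightarrow> (y,b)\<in>M \<Longrightarrow> (x+y, a+b)\<in>M"
    and Mp: "\<And>x a. (x,a)\<in>M \<Longrightarrow> a \<le> p x"
    using good unfolding dominated_graph_def linear_graph_def by blast+
  have key: "b - p (y - x0) \<le> p (x + x0) - a" if "(x,a)\<in>M" "(y,b)\<in>M" for x a y b
  proof -
    have "a + b \<le> p (x + y)" using Mp[OF Ma[OF that]] .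
    also have "x + y = (x + x0) + (y - x0)" by simp
    also have "p \<dots> \<le> p (x + x0) + p (y - x0)" by (rule sub)
    finally show ?thesis by simp
  qed
  define L where "L = {b - p (y - x0) | y b. (y,b)\<in>M}"
  have "L \<noteq> {}" using M0 unfolding L_def by blast
  moreover have "bdd_above L" unfolding L_def bdd_above_def using key[OF M0] by auto
  ultimately show ?thesis
    using key by (intro that[of "Sup L"] cSup_upper cSup_least) (auto simp: L_def)
qed

lemma dominated_graph_extension_le:
  fixes p :: "'x::real_vector \<Rightarrow> real"
  assumes hom: "\<And>t x. t > 0 \<Longrightarrow> p (t *\<^sub>R x) = t * p x"
    and Ms: "\<And>x a t. (x,a)\<in>M \<Longrightarrow> (t *\<^sub>R x, t*a)\<in>M" and Mp: "\<And>x a. (x,a)\<in>M \<Longrightarrow> a \<le> p x"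
    and c_ge: "\<And>y b. (y,b) \<in> M \<Longrightarrow> b - p (y - x0) \<le> c"
    and c_le: "\<And>x a. (x,a) \<in> M \<Longrightarrow> c \<le> p (x + x0) - a"
    and x: "(x,a) \<in> M"
  shows "a + t * c \<le> p (x + t *\<^sub>R x0)"
proof -
  consider "t = 0" | "t > 0" | "t < 0" by linarith
  then show ?thesis
  proof cases
    case 1 then show ?thesis using Mp[OF x] by simp
  next
    case 2
    have "c \<le> p ((1/t) *\<^sub>R x + x0) - (1/t) * a" using c_le Ms x by blast
    then have "t * c \<le> t * (p ((1/t) *\<^sub>R x + x0) - (1/t) * a)" using 2 by (intro mult_left_mono) auto
    also have "\<dots> = t * p ((1/t) *\<^sub>R x + x0) - a" using 2 by (simp add: right_diff_distrib)
    also have "t * p ((1/t) *\<^sub>R x + x0) = p (t *\<^sub>R ((1/t) *\<^sub>R x + x0))" using hom 2 by simp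
    also have "t *\<^sub>R ((1/t) *\<^sub>R x + x0) = x + t *\<^sub>R x0" using 2 by (simp add: scaleR_add_right)
    finally show ?thesis by simp
  next
    case 3
    define s where "s = - t"
    have s: "s > 0" using 3 by (simp add: s_def)
    have "(1/s) * a - p ((1/s) *\<^sub>R x - x0) \<le> c" using c_ge Ms x by blast
    then have "s * ((1/s) * a - p ((1/s) *\<^sub>R x - x0)) \<le> s * c" using s by (intro mult_left_mono) auto
    then have "a - s * p ((1/s) *\<^sub>R x - x0) \<le> s * c" using s by (simp add: right_diff_distrib)
    also have "s * p ((1/s) *\<^sub>R x - x0) = p (s *\<^sub>R ((1/s) *\<^sub>R x - x0))" using hom s by simp
    also have "s *\<^sub>R ((1/s) *\<^sub>R x - x0) = x + t *\<^sub>R x0" using s by (simp add: scaleR_diff_right s_def)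
    finally show ?thesis by (simp add: s_def)
qed
qed

lemma dominated_graph_extend:
  assumes sub: "\<And>x y. p (x + y) \<le> p x + p y"
    and hom: "\<And>t x. t > 0 \<Longrightarrow> p (t *\<^sub>R x) = t * p x"
    and good: "dominated_graph p G0 M" and x0: "\<And>a. (x0, a) \<notin> M"
  obtains M' where "dominated_graph p G0 M'" "M \<subseteq> M'" "M' \<noteq> M"
proof -
  obtain c where c_ge: "\<And>y b. (y,b) \<in> M \<Longrightarrow> b - p (y - x0) \<le> c"
    and c_le: "\<And>x a. (x,a) \<in> M \<Longrightarrow> c \<le> p (x + x0) - a"
    using dominated_graph_extension_constant[OF sub good] by blast
  define M' where "M' = {(x + t *\<^sub>R x0, a + t * c) | x a t. (x,a) \<in> M}"
  have lin: "linear_graph M" and G0: "G0 \<subseteq> M" and Mp: "\<And>x a. (x,a)\<in>M \<Longrightarrow> a \<le> p x"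
    using good unfolding dominated_graph_def by blast+
  have Ms: "\<And>x a t. (x,a)\<in>M \<Longrightarrow> (t *\<^sub>R x, t*a)\<in>M" and M0: "(0,0) \<in> M"
    using lin unfolding linear_graph_def by blast+
  have "M \<subseteq> M'"
  proof
    fix u assume "u \<in> M"
    then obtain x a where "u = (x,a)" "(x,a) \<in> M" by (cases u) auto
    then show "u \<in> M'" unfolding M'_def by (intro CollectI exI[of _ x] exI[of _ a] exI[of _ 0]) simp
  qed
  moreover have "(x0, c) \<in> M'" unfolding M'_def using M0 by (intro CollectI exI[of _ 0] exI[of _ 0] exI[of _ 1]) simp
  then have "M' \<noteq> M" using x0 by blast
  moreover have "a \<le> p x" if "(x,a) \<in> M'" for x a
    using that dominated_graph_extension_le[OF hom Ms Mp c_ge c_le] unfolding M'_def by blast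
  moreover have "linear_graph M'" unfolding M'_def by (rule linear_graph_extend[OF lin x0])
  ultimately show ?thesis using G0 that unfolding dominated_graph_def by blast
qed

lemma linear_graph_total:
  assumes lin: "linear_graph M" and total: "\<And>x. \<exists>a. (x,a) \<in> M"
  obtains h where "linear h" "\<And>x a. (x,a) \<in> M \<Longrightarrow> h x = a" "\<And>x. (x, h x) \<in> M"
proof -
  have Mf: "\<And>x a b. (x,a)\<in>M \<Longrightarrow> (x,b)\<in>M \<Longrightarrow> a = b"
    and Ma: "\<And>x a y b. (x,a)\<in>M \<Longrightarrow> (y,b)\<in>M \<Longrightarrow> (x+y, a+b)\<in>M"
    and Ms: "\<And>x a t. (x,a)\<in>M \<Longrightarrow> (t *\<^sub>R x, t*a)\<in>M"
    using lin unfolding linear_graph_def by blast+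
  define h where "h x = (THE a. (x,a) \<in> M)" for x
  have hM: "(x, h x) \<in> M" for x
  proof -
    obtain a where a: "(x,a) \<in> M" using total by blast
    show ?thesis unfolding h_def by (rule theI[where a=a]) (use a Mf in blast)+
  qed
  have hval: "(x,a) \<in> M \<Longrightarrow> h x = a" for x a using hM Mf by blast
  have "linear h"
  proof (rule linearI)
    show "h (x + y) = h x + h y" for x y using hval[OF Ma[OF hM hM]] .
    show "h (r *\<^sub>R x) = r *\<^sub>R h x" for r x using hval[OF Ms[OF hM]] by simp
  qed
  then show ?thesis using that hval hM by blast
qed

text \<open>The Hahn--Banach theorem for a sublinear functional \<open>p\<close>, in graph form: by Zorn's lemma
  there is a maximal dominated graph, which is total by \<open>dominated_graph_extend\<close>.\<close>
lemma dominated_linear_extension: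
  assumes sub: "\<And>x y. p (x + y) \<le> p x + p y"
    and hom: "\<And>t x. t > 0 \<Longrightarrow> p (t *\<^sub>R x) = t * p x"
    and good: "dominated_graph p G0 G0"
  shows "\<exists>h. linear h \<and> (\<forall>x a. (x,a) \<in> G0 \<longrightarrow> h x = a) \<and> (\<forall>x. h x \<le> p x)"
proof -
  have "\<forall>C\<in>chains {G. dominated_graph p G0 G}. \<exists>U\<in>{G. dominated_graph p G0 G}. \<forall>X\<in>C. X \<subseteq> U"
  proof
    fix C assume C: "C \<in> chains {G. dominated_graph p G0 G}"
    show "\<exists>U\<in>{G. dominated_graph p G0 G}. \<forall>X\<in>C. X \<subseteq> U"
    proof (cases "C = {}")
      case True then show ?thesis using good by blast
    next
      case False then show ?thesis using dominated_graph_Union_chain[OF C False] by blast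
    qed
  qed
  from Zorn_Lemma2[OF this] obtain M where M: "dominated_graph p G0 M"
    and max: "\<And>X. dominated_graph p G0 X \<Longrightarrow> M \<subseteq> X \<Longrightarrow> X = M" by blast
  have "\<exists>a. (x,a) \<in> M" for x
    using dominated_graph_extend[OF sub hom M, of x] max by blast
  moreover have "linear_graph M" using M unfolding dominated_graph_def by blast
  ultimately obtain h where "linear h" "\<And>x a. (x,a) \<in> M \<Longrightarrow> h x = a" "\<And>x. (x, h x) \<in> M"
    using linear_graph_total by metis
  with M show ?thesis unfolding dominated_graph_def by blast
qed

lemma infdist_ge_if_le_dist: "A \<noteq> {} \<Longrightarrow> (\<And>a. a \<in> A \<Longrightarrow> c \<le> dist x a) \<Longrightarrow> c \<le> infdist x A"
  by (simp add: infdist_def cINF_greatest)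

lemma infdist_subspace_add_le:
  fixes M :: "'x::real_normed_vector set"
  assumes "subspace M"
  shows "infdist (x + z) M \<le> infdist x M + infdist z M"
proof -
  have ne: "M \<noteq> {}" using subspace_0[OF assms] by blast
  have "infdist (x + z) M - infdist z M \<le> dist x m1" if m1: "m1 \<in> M" for m1
  proof -
    have "infdist (x + z) M - dist x m1 \<le> infdist z M"
    proof (rule infdist_ge_if_le_dist[OF ne])
      fix m2 assume m2: "m2 \<in> M"
      have "infdist (x + z) M \<le> dist (x + z) (m1 + m2)"
        using infdist_le subspace_add[OF assms m1 m2] by blast
      also have "\<dots> \<le> dist x m1 + dist z m2"
        by (simp add: dist_norm) (metis add_diff_add norm_triangle_ineq)
      finally show "infdist (x + z) M - dist x m1 \<le> dist z m2" by simp
    qed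
    then show ?thesis by simp
  qed
  then have "infdist (x + z) M - infdist z M \<le> infdist x M" by (intro infdist_ge_if_le_dist[OF ne])
  then show ?thesis by simp
qed

lemma infdist_subspace_scaleR_le:
  fixes M :: "'x::real_normed_vector set"
  assumes "subspace M" "t > 0"
  shows "infdist (t *\<^sub>R x) M \<le> t * infdist x M"
proof -
  have ne: "M \<noteq> {}" using subspace_0[OF assms(1)] by blast
  have "infdist (t *\<^sub>R x) M / t \<le> infdist x M"
  proof (rule infdist_ge_if_le_dist[OF ne])
    fix m assume m: "m \<in> M"
    have "infdist (t *\<^sub>R x) M \<le> dist (t *\<^sub>R x) (t *\<^sub>R m)"
      using infdist_le subspace_scale[OF assms(1) m] by blast
    also have "\<dots> = t * dist x m" using assms(2)
      by (simp add: dist_norm scaleR_diff_right[symmetric])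
    finally show "infdist (t *\<^sub>R x) M / t \<le> dist x m" using assms(2) by (simp add: divide_le_eq mult.commute)
  qed
  then show ?thesis using assms(2) by (simp add: divide_le_eq mult.commute)
qed

lemma infdist_subspace_scaleR:
  fixes M :: "'x::real_normed_vector set"
  assumes "subspace M" "t > 0"
  shows "infdist (t *\<^sub>R x) M = t * infdist x M"
proof (rule antisym)
  show "infdist (t *\<^sub>R x) M \<le> t * infdist x M" by (rule infdist_subspace_scaleR_le[OF assms])
  have "infdist ((1/t) *\<^sub>R (t *\<^sub>R x)) M \<le> (1/t) * infdist (t *\<^sub>R x) M"
    by (rule infdist_subspace_scaleR_le[OF assms(1)]) (use assms(2) in simp)
  then show "t * infdist x M \<le> infdist (t *\<^sub>R x) M" using assms(2) by (simp add: field_simps)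
qed

lemma dominated_graph_infdist_subspace:
  fixes M :: "'x::real_normed_vector set"
  assumes M: "subspace M" and y: "y \<notin> M"
  defines "G \<equiv> {(m + t *\<^sub>R y, t * infdist y M) | m t. m \<in> M}"
  shows "dominated_graph (\<lambda>x. infdist x M) G G"
  unfolding dominated_graph_def
proof (intro conjI allI impI subset_refl)
  have eq: "G = {(x + t *\<^sub>R y, a + t * infdist y M) | x a t. (x,a) \<in> {(m, 0) | m. m \<in> M}}"
    unfolding G_def by auto
  have "\<And>a. (y,a) \<notin> {(m, 0) | m. m \<in> M}" using y by blast
  then show "linear_graph G"
    unfolding eq by (rule linear_graph_extend[OF linear_graph_subspace_zero[OF M]])
next
  fix x a assume "(x,a) \<in> G"
  then obtain m t where E: "m \<in> M" "x = m + t *\<^sub>R y" "a = t * infdist y M" unfolding G_def by blast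
  show "a \<le> infdist x M"
  proof (cases "t > 0")
    case True
    have "infdist (t *\<^sub>R y) M \<le> infdist x M + infdist (- m) M"
      using infdist_subspace_add_le[OF M, of x "- m"] E by simp
    also have "infdist (- m) M = 0" using M E(1) by (simp add: subspace_neg)
    finally show ?thesis using infdist_subspace_scaleR[OF M True] E by simp
  next
    case False
    then have "a \<le> 0" using E by (simp add: mult_nonpos_nonneg infdist_nonneg)
    then show ?thesis using infdist_nonneg order_trans by blast
  qed
qed

lemma exists_functional_infdist_subspace:
  fixes M :: "'x::real_normed_vector set"
  assumes M: "subspace M"
  obtains f :: "'x \<Rightarrow>\<^sub>L real"
  where "norm f \<le> 1" "\<And>m. m \<in> M \<Longrightarrow> blinfun_apply f m = 0" "blinfun_apply f y = infdist y M"
proof (cases "y \<in> M")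
  case True then show ?thesis by (intro that[of 0]) simp_all
next
  case False
  define G where "G = {(m + t *\<^sub>R y, t * infdist y M) | m t. m \<in> M}"
  obtain h where h: "linear h" "\<And>x a. (x,a) \<in> G \<Longrightarrow> h x = a" "\<And>x. h x \<le> infdist x M"
    using dominated_linear_extension[OF infdist_subspace_add_le[OF M] infdist_subspace_scaleR[OF M]
        dominated_graph_infdist_subspace[OF M False]]
    unfolding G_def by blast
  have infdist_le_norm: "infdist x M \<le> norm x" for x
    using infdist_le[OF subspace_0[OF M], of x] by simp
  have bound: "norm (h x) \<le> norm x * 1" for x
    using h(3)[of x] h(3)[of "- x"] infdist_le_norm[of x] infdist_le_norm[of "- x"] linear_neg[OF h(1)]
    by auto
  have bl: "bounded_linear h"
    by (rule bounded_linear_intro[OF linear_add[OF h(1)] linear_scale[OF h(1)] bound])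
  show ?thesis
  proof (rule that[of "Blinfun h"])
    show "norm (Blinfun h) \<le> 1"
      by (rule norm_blinfun_bound) (use bound in \<open>auto simp: bounded_linear_Blinfun_apply[OF bl]\<close>)
    show "blinfun_apply (Blinfun h) m = 0" if "m \<in> M" for m
    proof -
      have "(m + 0 *\<^sub>R y, 0 * infdist y M) \<in> G" unfolding G_def using that by blast
      then show ?thesis using h(2) by (simp add: bounded_linear_Blinfun_apply[OF bl])
    qed
    show "blinfun_apply (Blinfun h) y = infdist y M"
    proof -
      have "(0 + 1 *\<^sub>R y, 1 * infdist y M) \<in> G" unfolding G_def using subspace_0[OF M] by blast
      then show ?thesis using h(2) by (simp add: bounded_linear_Blinfun_apply[OF bl])
    qed
  qed
qed

lemma exists_norming_functional:
  fixes y :: "'x::real_normed_vector"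
  obtains f :: "'x \<Rightarrow>\<^sub>L real" where "norm f \<le> 1" "blinfun_apply f y = norm y"
  using exists_functional_infdist_subspace[OF subspace_single_0, where y=y] by auto

lemma functionals_separate_points:
  fixes x y :: "'x::real_normed_vector"
  assumes "x \<noteq> y"
  obtains f :: "'x \<Rightarrow>\<^sub>L real" where "blinfun_apply f x \<noteq> blinfun_apply f y"
proof -
  obtain f :: "'x \<Rightarrow>\<^sub>L real" where "blinfun_apply f (x - y) = norm (x - y)"
    using exists_norming_functional by blast
  then have "blinfun_apply f x - blinfun_apply f y \<noteq> 0" using assms by (simp add: blinfun.diff_right)
  then show ?thesis using that by simp
qed

lemma closure_span_subset_if_annihilated:
  fixes A B :: "'x::real_normed_vector set"
  assumes "\<And>(f :: 'x \<Rightarrow>\<^sub>L real) y.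
    (\<And>a. a \<in> A \<Longrightarrow> blinfun_apply f a = 0) \<Longrightarrow> y \<in> B \<Longrightarrow> blinfun_apply f y = 0"
  shows "closure (span B) \<subseteq> closure (span A)"
proof (rule closure_minimal[OF _ closed_closure], rule subsetI)
  fix y assume y: "y \<in> span B"
  obtain f :: "'x \<Rightarrow>\<^sub>L real" where f: "\<And>m. m \<in> span A \<Longrightarrow> blinfun_apply f m = 0"
    "blinfun_apply f y = infdist y (span A)"
    using exists_functional_infdist_subspace[OF subspace_span] by metis
  have "B \<subseteq> {z. blinfun_apply f z = 0}" using assms[of f] f(1) span_base by blast
  moreover have "subspace {z. blinfun_apply f z = 0}"
    unfolding subspace_def by (simp add: blinfun.add_right blinfun.scaleR_right)
  ultimately have "span B \<subseteq> {z. blinfun_apply f z = 0}" by (rule span_minimal)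
  then have "infdist y (span A) = 0" using f(2) y by auto
  then show "y \<in> closure (span A)" using in_closure_iff_infdist_zero[of "span A"] span_0 by blast
qed

lemma norm_kappa [simp]:
  fixes x :: "'x::real_normed_vector"
  shows "norm (kappa x) = norm x"
proof (rule antisym[OF norm_kappa_le])
  obtain f :: "'x \<Rightarrow>\<^sub>L real" where f: "norm f \<le> 1" "blinfun_apply f x = norm x"
    using exists_norming_functional by blast
  have "norm x = norm (blinfun_apply (kappa x) f)" using f by simp
  also have "\<dots> \<le> norm (kappa x) * norm f" by (rule norm_blinfun)
  also have "\<dots> \<le> norm (kappa x)" using f(1) by (simp add: mult_left_le)
  finally show "norm x \<le> norm (kappa x)" .
qed

lemma kappa_inj: "kappa x = kappa y \<Longrightarrow> x = y"
  by (metis add_diff_cancel_left' kappa_add norm_eq_zero norm_kappa diff_add_cancel)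

lemma sum_power2_segment:
  fixes u w :: "'i \<Rightarrow> real"
  shows "(\<Sum>i\<in>I. ((1 - t) * u i + t * w i)\<^sup>2)
    = (\<Sum>i\<in>I. (u i)\<^sup>2) - 2 * t * ((\<Sum>i\<in>I. (u i)\<^sup>2) - (\<Sum>i\<in>I. u i * w i))
      + t\<^sup>2 * (\<Sum>i\<in>I. (w i - u i)\<^sup>2)"
proof -
  have "((1 - t) * u i + t * w i)\<^sup>2 = (u i)\<^sup>2 - 2 * t * ((u i)\<^sup>2 - u i * w i) + t\<^sup>2 * (w i - u i)\<^sup>2" for i
    by (simp add: power2_eq_square algebra_simps)
  then show ?thesis
    by (simp add: sum.distrib sum_subtractf sum_distrib_left right_diff_distrib)
qed

context
  fixes U :: "('i \<Rightarrow> real) set" and I :: "'i set" and B :: real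
  assumes nonempty: "U \<noteq> {}"
    and convex: "\<And>u w t. u \<in> U \<Longrightarrow> w \<in> U \<Longrightarrow> 0 \<le> t \<Longrightarrow> t \<le> 1 \<Longrightarrow> (\<lambda>i. (1 - t) * u i + t * w i) \<in> U"
    and bounded: "\<And>u i. u \<in> U \<Longrightarrow> i \<in> I \<Longrightarrow> \<bar>u i\<bar> \<le> B"
    and not_separated: "\<And>c \<epsilon>. \<epsilon> > 0 \<Longrightarrow> \<exists>u\<in>U. 0 \<le> (\<Sum>i\<in>I. c i * u i) + \<epsilon>"
begin

text \<open>If the infimum \<open>\<delta>\<close> were positive, moving from a point \<open>u0\<close> whose sum of squares is close
  to \<open>\<delta>\<close> towards the point supplied by \<open>not_separated\<close> for the functional \<open>-u0\<close> would push the
  sum of squares below \<open>\<delta>\<close>.\<close>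
lemma Inf_sum_power2_eq_zero: "Inf ((\<lambda>u. \<Sum>i\<in>I. (u i)\<^sup>2) ` U) = 0"
proof (rule ccontr)
  define d where "d u = (\<Sum>i\<in>I. (u i)\<^sup>2)" for u :: "'i \<Rightarrow> real"
  define \<delta> where "\<delta> = Inf (d ` U)"
  assume "Inf ((\<lambda>u. \<Sum>i\<in>I. (u i)\<^sup>2) ` U) \<noteq> 0"
  then have "\<delta> \<noteq> 0" by (simp add: \<delta>_def d_def)
  have bdd: "bdd_below (d ` U)" by (rule bdd_belowI[of _ 0]) (auto simp: d_def sum_nonneg)
  have d_ge: "u \<in> U \<Longrightarrow> \<delta> \<le> d u" for u unfolding \<delta>_def by (rule cInf_lower) (use bdd in auto)
  have "\<delta> \<ge> 0" unfolding \<delta>_def using nonempty by (intro cInf_greatest) (auto simp: d_def sum_nonneg)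
  with \<open>\<delta> \<noteq> 0\<close> have \<delta>: "\<delta> > 0" by simp
  define K where "K = (\<Sum>i\<in>I. (2 * B)\<^sup>2) + 1"
  have K: "K > 0" unfolding K_def by (simp add: sum_nonneg add_nonneg_pos)
  define t where "t = min 1 (\<delta> / (2 * K))"
  have "t * K \<le> \<delta> / (2 * K) * K" using K by (intro mult_right_mono) (auto simp: t_def)
  then have t: "0 < t" "t \<le> 1" "t * K \<le> \<delta> / 2"
    using \<delta> K by (auto simp: t_def)
  obtain u0 where u0: "u0 \<in> U" "d u0 < \<delta> + t * \<delta> / 2"
    using cInf_lessD[of "d ` U" "\<delta> + t * \<delta> / 2"] nonempty \<delta> t(1) unfolding \<delta>_def by auto
  obtain w where w: "w \<in> U" "(\<Sum>i\<in>I. u0 i * w i) \<le> \<delta> / 4"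
    using not_separated[of "\<delta> / 4" "\<lambda>i. - u0 i"] \<delta> by (auto simp: sum_negf)
  define z where "z = (\<lambda>i. (1 - t) * u0 i + t * w i)"
  define W where "W = (\<Sum>i\<in>I. (w i - u0 i)\<^sup>2)"
  have "W \<le> (\<Sum>i\<in>I. (2 * B)\<^sup>2)" unfolding W_def
  proof (rule sum_mono)
    fix i assume "i \<in> I"
    then have "\<bar>w i - u0 i\<bar> \<le> 2 * B" using bounded[OF w(1)] bounded[OF u0(1)] by fastforce
    then show "(w i - u0 i)\<^sup>2 \<le> (2 * B)\<^sup>2" by (metis abs_ge_zero power2_abs power_mono)
  qed
  then have "t\<^sup>2 * W \<le> t * (t * K)"
    using t by (auto simp: K_def power2_eq_square intro!: mult_left_mono)
  also have "\<dots> \<le> t * (\<delta> / 2)" using t by (intro mult_left_mono) auto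
  finally have W_le: "t\<^sup>2 * W \<le> t * \<delta> / 2" by simp
  define P where "P = (\<Sum>i\<in>I. u0 i * w i)"
  have "t * P \<le> t * (\<delta> / 4)" using w(2) t(1) unfolding P_def by (intro mult_left_mono) auto
  then have "t * P \<le> (t * \<delta>) / 4" by simp
  moreover have "t * \<delta> \<le> t * d u0" using d_ge[OF u0(1)] t(1) by (intro mult_left_mono) auto
  moreover have "d z = d u0 - 2 * (t * d u0) + 2 * (t * P) + t\<^sup>2 * W"
    using sum_power2_segment[of t u0 w I] unfolding d_def z_def W_def P_def by (simp add: algebra_simps)
  moreover have "0 < t * \<delta>" using t(1) \<delta> by simp
  ultimately have "d z < \<delta>" using W_le u0(2) by linarith
  then show False using d_ge[OF convex[OF u0(1) w(1) less_imp_le[OF t(1)] t(2)]] by (simp add: z_def)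
qed

lemma finite_convex_approx_zero:
  assumes "finite I" and e: "e > 0"
  shows "\<exists>u\<in>U. \<forall>i\<in>I. \<bar>u i\<bar> < e"
proof -
  have "Inf ((\<lambda>u. \<Sum>i\<in>I. (u i)\<^sup>2) ` U) < e\<^sup>2"
    using Inf_sum_power2_eq_zero e by simp
  then obtain u where u: "u \<in> U" "(\<Sum>i\<in>I. (u i)\<^sup>2) < e\<^sup>2"
    using cInf_lessD[of "(\<lambda>u. \<Sum>i\<in>I. (u i)\<^sup>2) ` U"] nonempty by auto
  have "\<bar>u i\<bar> < e" if "i \<in> I" for i
  proof -
    have "(u i)\<^sup>2 \<le> (\<Sum>i\<in>I. (u i)\<^sup>2)" by (rule member_le_sum[OF that _ assms(1)]) simp
    then have "\<bar>u i\<bar>\<^sup>2 < e\<^sup>2" using u(2) by simp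
    then show ?thesis by (rule power2_less_imp_less) (use e in simp)
  qed
  then show ?thesis using u(1) by blast
qed

end

lemma limitin_wstar_top_iff:
  "limitin wstar_top g l F \<longleftrightarrow> (\<forall>f. ((\<lambda>x. blinfun_apply (g x) f) \<longlongrightarrow> blinfun_apply l f) F)"
  unfolding wstar_top_eq_init_topology by (subst limitin_init_topology_iff) auto

lemma topspace_weak_top [simp]: "topspace weak_top = UNIV"
  unfolding weak_top_eq_init_topology by simp

lemma topspace_wstar_top [simp]: "topspace wstar_top = UNIV"
  unfolding wstar_top_eq_init_topology by simp

lemma continuous_map_weak_top_apply: "continuous_map weak_top euclideanreal (blinfun_apply f)"
  unfolding weak_top_eq_init_topology by (rule continuous_map_init_topology) auto

lemma continuous_map_wstar_top_apply: "continuous_map wstar_top euclideanreal (\<lambda>\<Phi>. blinfun_apply \<Phi> f)"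
  unfolding wstar_top_eq_init_topology by (rule continuous_map_init_topology) auto

lemma Hausdorff_space_weak_top: "Hausdorff_space (weak_top :: 'x::real_normed_vector topology)"
  unfolding weak_top_eq_init_topology
proof (rule Hausdorff_space_init_topology)
  fix x y :: 'x assume "x \<noteq> y"
  then obtain f :: "'x \<Rightarrow>\<^sub>L real" where "blinfun_apply f x \<noteq> blinfun_apply f y"
    by (rule functionals_separate_points)
  then show "\<exists>h\<in>range (blinfun_apply :: ('x \<Rightarrow>\<^sub>L real) \<Rightarrow> 'x \<Rightarrow> real). h x \<noteq> h y"
    using rangeI[of blinfun_apply f] by blast
qed auto

lemma Hausdorff_space_wstar_top: "Hausdorff_space wstar_top"
  unfolding wstar_top_eq_init_topology
proof (rule Hausdorff_space_init_topology)
  fix x y :: "'e::real_normed_vector bidual" assume "x \<noteq> y"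
  then obtain f where "blinfun_apply x f \<noteq> blinfun_apply y f" using blinfun_eqI by metis
  then show "\<exists>h\<in>range (\<lambda>f \<Phi>. blinfun_apply \<Phi> f). h x \<noteq> h y"
    by (intro bexI[of _ "\<lambda>\<Phi>. blinfun_apply \<Phi> f"]) auto
qed auto

lemma limitin_wstar_top_unique:
  "limitin wstar_top f l1 F \<Longrightarrow> limitin wstar_top f l2 F \<Longrightarrow> F \<noteq> bot \<Longrightarrow> l1 = l2"
  using limitin_Hausdorff_unique[OF _ _ _ Hausdorff_space_wstar_top] by blast

lemma wlim_eqI: "limitin wstar_top h R F \<Longrightarrow> F \<noteq> bot \<Longrightarrow> wlim F h = R"
  unfolding wlim_def by (rule the_equality) (auto intro: limitin_wstar_top_unique)

lemma exists_almost_norming_vector: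
  fixes g :: "'a::real_normed_vector \<Rightarrow>\<^sub>L real"
  assumes e: "e > 0"
  obtains a where "norm a \<le> 1" "norm g - e \<le> blinfun_apply g a"
proof (rule ccontr)
  assume "\<not> thesis"
  then have lt: "\<And>a. norm a \<le> 1 \<Longrightarrow> blinfun_apply g a < norm g - e"
    using that by (meson not_le)
  have "\<bar>blinfun_apply g x\<bar> \<le> (norm g - e) * norm x" for x
  proof (cases "x = 0")
    case False
    define a where "a = (1 / norm x) *\<^sub>R x"
    have "blinfun_apply g a < norm g - e" "blinfun_apply g (- a) < norm g - e"
      using lt False by (simp_all add: a_def)
    then have "\<bar>blinfun_apply g a\<bar> \<le> norm g - e" by (simp add: blinfun.minus_right)
    moreover have "blinfun_apply g x = norm x * blinfun_apply g a"
      using False by (simp add: a_def blinfun.scaleR_right)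
    ultimately show ?thesis by (simp add: abs_mult mult.commute mult_left_mono)
  qed simp
  moreover have "norm g - e > 0" using lt[of 0] by simp
  ultimately have "norm g \<le> norm g - e" by (intro norm_blinfun_bound) auto
  then show False using e by simp
qed

lemma exists_bidual_apply_le:
  fixes S :: "'a::real_normed_vector bidual"
  assumes e: "e > 0"
  obtains a where "norm a \<le> norm S" "blinfun_apply S h \<le> blinfun_apply h a + e"
proof -
  define r where "r = norm S"
  have r: "r \<ge> 0" by (simp add: r_def)
  obtain b where b: "norm b \<le> 1" "norm h - e / (r + 1) \<le> blinfun_apply h b"
    using exists_almost_norming_vector[of "e / (r + 1)" h] e r by auto
  have "blinfun_apply S h \<le> r * norm h"
    using norm_blinfun[of S h] by (simp add: r_def)
  also have "\<dots> \<le> r * (blinfun_apply h b + e / (r + 1))"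
    using b(2) r by (intro mult_left_mono) auto
  also have "\<dots> = blinfun_apply h (r *\<^sub>R b) + r * (e / (r + 1))"
    by (simp add: blinfun.scaleR_right distrib_left)
  also have "r * (e / (r + 1)) \<le> e"
    using r e by (simp add: field_simps)
  finally show ?thesis using b(1) r by (intro that[of "r *\<^sub>R b"]) (auto simp: r_def mult_left_le)
qed

section \<open>Goldstine and Banach--Alaoglu\<close>

lemma abs_apply_sub_bidual_le:
  fixes T :: "'a::real_normed_vector \<Rightarrow>\<^sub>L 'x::real_normed_vector" and S :: "'a bidual"
  assumes a: "norm a \<le> norm S"
  shows "\<bar>blinfun_apply f (blinfun_apply T a) - blinfun_apply S (f o\<^sub>L T)\<bar> \<le> 2 * (norm f * norm T * norm S)"
proof -
  have "norm (blinfun_apply T a) \<le> norm T * norm S"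
    using norm_blinfun[of T a] mult_left_mono[OF a norm_ge_zero[of T]] by linarith
  then have "norm f * norm (blinfun_apply T a) \<le> norm f * (norm T * norm S)"
    by (rule mult_left_mono) simp
  then have "\<bar>blinfun_apply f (blinfun_apply T a)\<bar> \<le> norm f * norm T * norm S"
    using norm_blinfun[of f "blinfun_apply T a"] by simp
  moreover have "norm S * norm (f o\<^sub>L T) \<le> norm S * (norm f * norm T)"
    by (rule mult_left_mono[OF norm_blinfun_compose]) simp
  then have "\<bar>blinfun_apply S (f o\<^sub>L T)\<bar> \<le> norm f * norm T * norm S"
    using norm_blinfun[of S "f o\<^sub>L T"] by (simp add: algebra_simps)
  ultimately show ?thesis by linarith
qed

text \<open>A quantitative form of Goldstine's theorem.\<close>
lemma biadj_approx_by_kappa: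
  fixes T :: "'a::real_normed_vector \<Rightarrow>\<^sub>L 'x::real_normed_vector" and S :: "'a bidual"
  assumes "finite Fs" "e > 0"
  obtains a where "norm a \<le> norm S"
    "\<And>f. f \<in> Fs \<Longrightarrow> \<bar>blinfun_apply f (blinfun_apply T a) - blinfun_apply S (f o\<^sub>L T)\<bar> < e"
proof -
  define r where "r = norm S"
  define v where "v a = (\<lambda>f. blinfun_apply f (blinfun_apply T a) - blinfun_apply S (f o\<^sub>L T))" for a
  have v_comb: "(1 - t) * v a f + t * v b f = v ((1 - t) *\<^sub>R a + t *\<^sub>R b) f" for a b t f
    by (simp add: v_def blinfun.add_right blinfun.scaleR_right) (simp add: algebra_simps)
  have v_sum: "(\<Sum>f\<in>Fs. c f * v a f) = blinfun_apply (g o\<^sub>L T) a - blinfun_apply S (g o\<^sub>L T)"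
    if g: "g = (\<Sum>f\<in>Fs. c f *\<^sub>R f)" for a c g
  proof -
    have "g o\<^sub>L T = (\<Sum>f\<in>Fs. c f *\<^sub>R (f o\<^sub>L T))"
      by (rule blinfun_eqI) (simp add: g blinfun.sum_left blinfun.scaleR_left)
    then show ?thesis
      by (simp add: g v_def blinfun.sum_left blinfun.scaleR_left blinfun.sum_right
          blinfun.scaleR_right right_diff_distrib sum_subtractf)
  qed
  have "\<exists>u\<in>v ` cball 0 r. \<forall>f\<in>Fs. \<bar>u f\<bar> < e"
  proof (rule finite_convex_approx_zero[where B = "2 * ((\<Sum>f\<in>Fs. norm f) * norm T * r)"])
    show "v ` cball 0 r \<noteq> {}" by (simp add: r_def)
  next
    fix u w and t :: real assume "u \<in> v ` cball 0 r" "w \<in> v ` cball 0 r" and t: "0 \<le> t" "t \<le> 1"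
    then obtain a b where ab: "a \<in> cball 0 r" "b \<in> cball 0 r" "u = v a" "w = v b" by blast
    have "(1 - t) *\<^sub>R a + t *\<^sub>R b \<in> cball 0 r"
      using convexD[OF convex_cball ab(1,2)] t by simp
    moreover have "(\<lambda>f. (1 - t) * u f + t * w f) = v ((1 - t) *\<^sub>R a + t *\<^sub>R b)"
      unfolding ab(3,4) v_comb ..
    ultimately show "(\<lambda>f. (1 - t) * u f + t * w f) \<in> v ` cball 0 r" by (rule rev_image_eqI)
  next
    fix u f assume "u \<in> v ` cball 0 r" "f \<in> Fs"
    then obtain a where a: "norm a \<le> r" "u = v a" by auto
    have "norm f * norm T * r \<le> (\<Sum>f\<in>Fs. norm f) * norm T * r"
      using \<open>f \<in> Fs\<close> assms(1) by (intro mult_right_mono member_le_sum) (auto simp: r_def)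
    with abs_apply_sub_bidual_le[OF a(1)[unfolded r_def], of f T] show "\<bar>u f\<bar> \<le> 2 * ((\<Sum>f\<in>Fs. norm f) * norm T * r)"
      unfolding a(2) v_def r_def by linarith
  next
    fix c :: "('x \<Rightarrow>\<^sub>L real) \<Rightarrow> real" and \<epsilon> :: real assume "\<epsilon> > 0"
    define g where "g = (\<Sum>f\<in>Fs. c f *\<^sub>R f)"
    obtain a where a: "norm a \<le> r" "blinfun_apply S (g o\<^sub>L T) \<le> blinfun_apply (g o\<^sub>L T) a + \<epsilon>"
      using exists_bidual_apply_le[OF \<open>\<epsilon> > 0\<close>] unfolding r_def by blast
    have "0 \<le> (\<Sum>f\<in>Fs. c f * v a f) + \<epsilon>" using v_sum[OF g_def] a(2) by simp
    moreover have "v a \<in> v ` cball 0 r" using a(1) by simp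
    ultimately show "\<exists>u\<in>v ` cball 0 r. 0 \<le> (\<Sum>f\<in>Fs. c f * u f) + \<epsilon>" by blast
  qed (use assms in auto)
  then obtain a where "norm a \<le> r" "\<And>f. f \<in> Fs \<Longrightarrow> \<bar>v a f\<bar> < e" by auto
  then show ?thesis using that unfolding v_def r_def by blast
qed

lemma closedin_product_dual_ball:
  "closedin (product_topology (\<lambda>_::'v::real_normed_vector. euclideanreal) UNIV)
     {g. (\<forall>f. \<bar>g f\<bar> \<le> norm f) \<and> (\<forall>f1 f2. g (f1 + f2) = g f1 + g f2) \<and> (\<forall>r f. g (r *\<^sub>R f) = r * g f)}"
  (is "closedin ?P ?Q")
proof -
  have ts: "topspace ?P = UNIV" by simp
  have proj: "continuous_map ?P euclideanreal (\<lambda>g. g f)" for f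
    by (rule continuous_map_product_projection) simp
  have closed_eq: "closedin ?P {g. p g = q g}"
    if "continuous_map ?P euclideanreal p" "continuous_map ?P euclideanreal q" for p q
  proof -
    have "closedin ?P {g \<in> topspace ?P. p g - q g \<in> {0}}"
      by (rule closedin_continuous_map_preimage[OF continuous_map_diff[OF that]]) simp
    then show ?thesis by (simp add: ts)
  qed
  have bound: "closedin ?P {g. \<bar>g f\<bar> \<le> norm f}" for f
  proof -
    have "closedin ?P {g \<in> topspace ?P. g f \<in> cball 0 (norm f)}"
      by (rule closedin_continuous_map_preimage[OF proj]) simp
    then show ?thesis by (simp add: ts)
  qed
  have "closedin ?P ((\<Inter>f. {g. \<bar>g f\<bar> \<le> norm f}) \<inter> (\<Inter>f1. \<Inter>f2. {g. g (f1 + f2) = g f1 + g f2})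
      \<inter> (\<Inter>r. \<Inter>f. {g. g (r *\<^sub>R f) = r * g f}))"
    by (intro closedin_Int closedin_INT bound closed_eq proj continuous_map_add
        continuous_map_real_mult_left) simp_all
  moreover have "?Q = (\<Inter>f. {g. \<bar>g f\<bar> \<le> norm f}) \<inter> (\<Inter>f1. \<Inter>f2. {g. g (f1 + f2) = g f1 + g f2})
      \<inter> (\<Inter>r. \<Inter>f. {g. g (r *\<^sub>R f) = r * g f})"
    by blast
  ultimately show ?thesis by simp
qed

lemma Blinfun_image_dual_ball:
  "Blinfun ` {g. (\<forall>f. \<bar>g f\<bar> \<le> norm f) \<and> (\<forall>f1 f2. g (f1 + f2) = g f1 + g f2) \<and> (\<forall>r f. g (r *\<^sub>R f) = r * g f)}
    = cball (0::'v::real_normed_vector \<Rightarrow>\<^sub>L real) 1" (is "Blinfun ` ?Q = _")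
proof
  have bl: "bounded_linear g" if "g \<in> ?Q" for g
    using that by (intro bounded_linear_intro[where K=1]) auto
  show "Blinfun ` ?Q \<subseteq> cball 0 1"
  proof
    fix \<Phi> assume "\<Phi> \<in> Blinfun ` ?Q"
    then obtain g where g: "g \<in> ?Q" "\<Phi> = Blinfun g" by blast
    have "\<bar>g f\<bar> \<le> norm f * 1" for f using g(1) by simp
    then have "norm \<Phi> \<le> 1" unfolding g(2)
      by (intro norm_blinfun_bound) (simp_all add: bounded_linear_Blinfun_apply[OF bl[OF g(1)]])
    then show "\<Phi> \<in> cball 0 1" by simp
  qed
  show "cball 0 1 \<subseteq> Blinfun ` ?Q"
  proof
    fix \<Phi> :: "'v \<Rightarrow>\<^sub>L real" assume "\<Phi> \<in> cball 0 1"
    then have "\<bar>blinfun_apply \<Phi> f\<bar> \<le> norm f" for f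
      using norm_blinfun[of \<Phi> f] mult_right_mono[of "norm \<Phi>" 1 "norm f"] by simp
    then have "blinfun_apply \<Phi> \<in> ?Q" by (simp add: blinfun.add_right blinfun.scaleR_right)
    then show "\<Phi> \<in> Blinfun ` ?Q" by (rule rev_image_eqI) (simp add: blinfun_apply_inverse)
  qed
qed

text \<open>Banach--Alaoglu for the bidual, proved via Tychonoff: the unit ball is the image of a closed
  subset of the compact product \<open>\<Pi>\<^sub>f [-\<parallel>f\<parallel>, \<parallel>f\<parallel>]\<close>.\<close>
lemma compactin_wstar_top_cball: "compactin wstar_top (cball (0::'e::real_normed_vector bidual) 1)"
proof -
  define P where "P = product_topology (\<lambda>_::('e \<Rightarrow>\<^sub>L real). euclideanreal) UNIV"
  define Q where "Q = {g::('e \<Rightarrow>\<^sub>L real) \<Rightarrow> real. (\<forall>f. \<bar>g f\<bar> \<le> norm f) \<and>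
      (\<forall>f1 f2. g (f1 + f2) = g f1 + g f2) \<and> (\<forall>r f. g (r *\<^sub>R f) = r * g f)}"
  have "compactin P (PiE UNIV (\<lambda>f. cball 0 (norm f)))"
    unfolding P_def by (simp add: compactin_PiE)
  moreover have "Q \<subseteq> PiE UNIV (\<lambda>f. cball 0 (norm f))"
    unfolding Q_def by (auto simp: PiE_UNIV_domain)
  ultimately have "compactin P Q"
    using closedin_product_dual_ball unfolding P_def Q_def by (rule closed_compactin)
  then have compact_Q: "compactin (subtopology P Q) Q" by (simp add: compactin_subtopology)
  have bl: "bounded_linear g" if "g \<in> Q" for g
    using that unfolding Q_def by (intro bounded_linear_intro[where K=1]) auto
  have cont: "continuous_map (subtopology P Q) wstar_top Blinfun"
    unfolding wstar_top_eq_init_topology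
  proof (rule continuous_map_into_init_topology)
    fix h :: "'e bidual \<Rightarrow> real" assume "h \<in> range (\<lambda>f \<Phi>. blinfun_apply \<Phi> f)"
    then obtain f where h: "h = (\<lambda>\<Phi>. blinfun_apply \<Phi> f)" by blast
    have "continuous_map (subtopology P Q) euclideanreal (\<lambda>g. g f)"
      unfolding P_def by (rule continuous_map_from_subtopology[OF continuous_map_product_projection]) simp
    then show "continuous_map (subtopology P Q) euclideanreal (\<lambda>g. h (Blinfun g))"
      by (rule continuous_map_eq) (simp add: h bounded_linear_Blinfun_apply[OF bl])
  qed auto
  have "Blinfun ` Q = cball 0 1" unfolding Q_def by (rule Blinfun_image_dual_ball)
  with image_compactin[OF compact_Q cont] show ?thesis by simp
qed

lemma bnd_net_exists:
  fixes S :: "'a::real_normed_vector bidual"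
  obtains F where "bnd_net F S"
proof -
  define F where "F = inf (filtercomap kappa (nhdsin wstar_top S)) (principal (cball 0 (norm S)))"
  have "F \<noteq> bot"
  proof
    assume "F = bot"
    then have "eventually (\<lambda>a. a \<in> cball 0 (norm S) \<longrightarrow> False) (filtercomap kappa (nhdsin wstar_top S))"
      unfolding F_def eventually_inf_principal[symmetric] by simp
    then obtain Q where Q: "eventually Q (nhdsin wstar_top S)" "\<And>a. Q (kappa a) \<Longrightarrow> norm a > norm S"
      unfolding eventually_filtercomap by force
    then obtain W where W: "openin wstar_top W" "S \<in> W" "\<And>x. x \<in> W \<Longrightarrow> Q x"
      unfolding eventually_nhdsin by auto
    obtain Hs e where He: "finite Hs" "Hs \<subseteq> range (\<lambda>f \<Phi>. blinfun_apply \<Phi> f)" "e > 0"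
      "{z. \<forall>h\<in>Hs. \<bar>h z - h S\<bar> < e} \<subseteq> W"
      using init_topology_basic_nbhd[OF W(1)[unfolded wstar_top_eq_init_topology] W(2)] by blast
    obtain Fs where Fs: "finite Fs" "Hs = (\<lambda>f \<Phi>. blinfun_apply \<Phi> f) ` Fs"
      using finite_subset_image[OF He(1,2)] by blast
    have id: "f o\<^sub>L id_blinfun = f" for f :: "'a \<Rightarrow>\<^sub>L real" by (rule blinfun_eqI) simp
    obtain a where a: "norm a \<le> norm S" "\<And>f. f \<in> Fs \<Longrightarrow> \<bar>blinfun_apply f a - blinfun_apply S f\<bar> < e"
      using biadj_approx_by_kappa[OF Fs(1) He(3), where T=id_blinfun and S=S] by (auto simp: id)
    then have "kappa a \<in> W" using He(4) unfolding Fs(2) by auto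
    then show False using W(3) Q(2) a(1) by fastforce
  qed
  moreover have "eventually (\<lambda>a. a \<in> cball 0 (norm S)) F"
    unfolding F_def eventually_inf_principal by simp
  moreover have "limitin wstar_top kappa S F"
    unfolding limitin_def
  proof (intro conjI allI impI)
    fix U assume "openin wstar_top U \<and> S \<in> U"
    then have "eventually (\<lambda>a. kappa a \<in> U) (filtercomap kappa (nhdsin wstar_top S))"
      unfolding eventually_filtercomap by (intro exI[of _ "\<lambda>x. x \<in> U"]) (auto simp: eventually_nhdsin)
    then show "eventually (\<lambda>a. kappa a \<in> U) F" unfolding F_def by (rule filter_leD[OF inf_le1])
  qed simp
  ultimately have "bnd_net F S" unfolding bnd_net_def by (blast intro: bounded_cball)
  then show ?thesis by (rule that)
qed

section \<open>Gantmacher's theorem\<close>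

lemma closedin_weak_top_strip:
  fixes f :: "'x::real_normed_vector \<Rightarrow>\<^sub>L real"
  shows "closedin weak_top {y. \<bar>blinfun_apply f y - c\<bar> \<le> e}"
proof -
  have "closedin weak_top {y \<in> topspace weak_top. blinfun_apply f y \<in> cball c e}"
    by (rule closedin_continuous_map_preimage[OF continuous_map_weak_top_apply]) simp
  then show ?thesis by (simp add: dist_real_def abs_minus_commute)
qed

text \<open>One half of Gantmacher's theorem: \<open>T\<^sup>*\<^sup>*\<close> maps the weak* compact unit ball weak*-to-weakly
  continuously into \<open>X\<close>, and its image contains \<open>T\<close> of the unit ball.\<close>
lemma weakly_compact_if_biadj_range_kappa:
  fixes T :: "'a::real_normed_vector \<Rightarrow>\<^sub>L 'x::real_normed_vector"
  assumes range: "\<And>S. \<exists>y. blinfun_apply (biadj T) S = kappa y"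
  shows "weakly_compact T"
proof -
  define \<Theta> where "\<Theta> S = (SOME y. blinfun_apply (biadj T) S = kappa y)" for S
  have \<Theta>: "kappa (\<Theta> S) = blinfun_apply (biadj T) S" for S
    unfolding \<Theta>_def by (rule someI_ex[OF range, THEN sym])
  define B where "B = cball (0::'a bidual) 1"
  have cont: "continuous_map (subtopology wstar_top B) weak_top \<Theta>"
    unfolding weak_top_eq_init_topology
  proof (rule continuous_map_into_init_topology)
    fix h :: "'x \<Rightarrow> real" assume "h \<in> range (blinfun_apply :: ('x \<Rightarrow>\<^sub>L real) \<Rightarrow> _)"
    then obtain f :: "'x \<Rightarrow>\<^sub>L real" where h: "h = blinfun_apply f" by blast
    have "h (\<Theta> S) = blinfun_apply S (f o\<^sub>L T)" for S
      using arg_cong[OF \<Theta>[of S], of "\<lambda>\<Phi>. blinfun_apply \<Phi> f"] by (simp add: h)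
    moreover have "continuous_map (subtopology wstar_top B) euclideanreal (\<lambda>S. blinfun_apply S (f o\<^sub>L T))"
      by (rule continuous_map_from_subtopology[OF continuous_map_wstar_top_apply])
    ultimately show "continuous_map (subtopology wstar_top B) euclideanreal (\<lambda>S. h (\<Theta> S))" by simp
  qed auto
  have "compactin (subtopology wstar_top B) B"
    unfolding B_def by (simp add: compactin_subtopology compactin_wstar_top_cball)
  then have compact: "compactin weak_top (\<Theta> ` B)" by (rule image_compactin[OF _ cont])
  have "blinfun_apply T ` cball 0 1 \<subseteq> \<Theta> ` B"
  proof
    fix y assume "y \<in> blinfun_apply T ` cball 0 1"
    then obtain a where a: "norm a \<le> 1" "y = blinfun_apply T a" by auto
    have "\<Theta> (kappa a) = y" using \<Theta>[of "kappa a"] a(2) by (simp add: biadj_kappa kappa_inj)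
    moreover have "kappa a \<in> B" using a(1) by (simp add: B_def)
    ultimately show "y \<in> \<Theta> ` B" by blast
  qed
  then have "weak_top closure_of (blinfun_apply T ` cball 0 1) \<subseteq> \<Theta> ` B"
    by (rule closure_of_minimal[OF _ compactin_imp_closedin[OF Hausdorff_space_weak_top compact]])
  then show ?thesis unfolding weakly_compact_def by (rule closed_compactin[OF compact]) simp
qed

lemma biadj_range_kappa_if_weakly_compact_ball:
  fixes T :: "'a::real_normed_vector \<Rightarrow>\<^sub>L 'x::real_normed_vector"
  assumes wc: "weakly_compact T" and S: "norm S \<le> 1"
  shows "\<exists>y. blinfun_apply (biadj T) S = kappa y"
proof -
  define K where "K = weak_top closure_of (blinfun_apply T ` cball 0 1)"
  define \<Phi> where "\<Phi> = blinfun_apply (biadj T) S"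
  define strip where "strip p = {y. \<bar>blinfun_apply (fst p) y - blinfun_apply \<Phi> (fst p)\<bar> \<le> snd p}"
    for p :: "('x \<Rightarrow>\<^sub>L real) \<times> real"
  define \<U> where "\<U> = strip ` (UNIV \<times> {0<..})"
  have TK: "blinfun_apply T ` cball 0 1 \<subseteq> K" unfolding K_def by (rule closure_of_subset) simp
  have "compactin weak_top K" using wc unfolding weakly_compact_def K_def .
  then have "K \<inter> \<Inter>\<U> \<noteq> {}"
  proof (rule compactin_fip[THEN iffD1, THEN conjunct2, rule_format], intro conjI allI impI)
    show "\<forall>C\<in>\<U>. closedin weak_top C" unfolding \<U>_def strip_def using closedin_weak_top_strip by blast
    fix \<F> assume "finite \<F> \<and> \<F> \<subseteq> \<U>"
    then obtain P where P: "finite P" "P \<subseteq> UNIV \<times> {0<..}" "\<F> = strip ` P"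
      unfolding \<U>_def using finite_subset_image by metis
    define e where "e = Min (insert 1 (snd ` P))"
    have e: "e > 0" "\<And>p. p \<in> P \<Longrightarrow> e \<le> snd p" using P by (auto simp: e_def)
    obtain a where a: "norm a \<le> norm S"
      "\<And>f. f \<in> fst ` P \<Longrightarrow> \<bar>blinfun_apply f (blinfun_apply T a) - blinfun_apply S (f o\<^sub>L T)\<bar> < e"
      using biadj_approx_by_kappa[OF finite_imageI[OF P(1)] e(1)] by blast
    have "blinfun_apply T a \<in> strip p" if "p \<in> P" for p
      using a(2)[of "fst p"] e(2)[OF that] that by (force simp: strip_def \<Phi>_def)
    moreover have "blinfun_apply T a \<in> K" using TK a(1) S by auto
    ultimately show "K \<inter> \<Inter>\<F> \<noteq> {}" using P(3) by blast
  qed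
  then obtain y where y: "\<And>p. p \<in> UNIV \<times> {0<..} \<Longrightarrow> y \<in> strip p" unfolding \<U>_def by blast
  have "blinfun_apply f y = blinfun_apply \<Phi> f" for f
  proof -
    have "\<bar>blinfun_apply f y - blinfun_apply \<Phi> f\<bar> \<le> e" if "e > 0" for e
      using y[of "(f, e)"] that by (simp add: strip_def)
    then show ?thesis by (metis abs_le_zero_iff dense_ge eq_iff_diff_eq_0)
  qed
  then have "\<Phi> = kappa y" by (intro blinfun_eqI) simp
  then show ?thesis unfolding \<Phi>_def by blast
qed

lemma biadj_range_kappa_if_weakly_compact:
  fixes T :: "'a::real_normed_vector \<Rightarrow>\<^sub>L 'x::real_normed_vector"
  assumes wc: "weakly_compact T"
  shows "\<exists>y. blinfun_apply (biadj T) S = kappa y"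
proof (cases "S = 0")
  case True then show ?thesis by (intro exI[of _ 0]) simp
next
  case False
  define r where "r = norm S"
  have r: "r > 0" using False by (simp add: r_def)
  obtain y where y: "blinfun_apply (biadj T) ((1 / r) *\<^sub>R S) = kappa y"
    using biadj_range_kappa_if_weakly_compact_ball[OF wc, of "(1 / r) *\<^sub>R S"] r by (auto simp: r_def)
  have "blinfun_apply (biadj T) S = r *\<^sub>R blinfun_apply (biadj T) ((1 / r) *\<^sub>R S)"
    using r by (simp add: blinfun.scaleR_right)
  also have "\<dots> = kappa (r *\<^sub>R y)" by (simp add: y kappa_scaleR)
  finally show ?thesis by blast
qed

lemma weakly_compact_iff_biadj_range_kappa:
  fixes T :: "'a::real_normed_vector \<Rightarrow>\<^sub>L 'x::real_normed_vector"
  shows "weakly_compact T \<longleftrightarrow> (\<forall>S. \<exists>y. blinfun_apply (biadj T) S = kappa y)"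
  using weakly_compact_if_biadj_range_kappa biadj_range_kappa_if_weakly_compact by blast

section \<open>Arens products\<close>

text \<open>With \<open>M\<close> the left or right multiplication of \<open>A\<close>, \<open>arens_act M \<Phi> f\<close> is one of the two
  module actions of \<open>A\<^sup>*\<^sup>*\<close> on \<open>A\<^sup>*\<close> in terms of which the Arens products are computed.\<close>
definition arens_act :: "('a::real_normed_vector \<Rightarrow> ('a \<Rightarrow>\<^sub>L 'a)) \<Rightarrow> 'a bidual \<Rightarrow> ('a \<Rightarrow>\<^sub>L real) \<Rightarrow> ('a \<Rightarrow>\<^sub>L real)"
  where "arens_act M \<Phi> f = Blinfun (\<lambda>a. blinfun_apply \<Phi> (f o\<^sub>L M a))"

lemma arens_act_apply:
  assumes "bounded_linear M"
  shows "blinfun_apply (arens_act M \<Phi> f) a = blinfun_apply \<Phi> (f o\<^sub>L M a)"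
proof -
  have "bounded_linear (\<lambda>a. f o\<^sub>L M a)"
    by (rule bounded_linear_compose[OF bounded_bilinear.bounded_linear_right[OF bounded_bilinear_blinfun_compose] assms])
  then show ?thesis
    unfolding arens_act_def by (simp add: bounded_linear_Blinfun_apply bounded_linear_compose[OF blinfun.bounded_linear_right])
qed

lemma bounded_linear_arens_act:
  assumes M: "bounded_linear M"
  shows "bounded_linear (arens_act M \<Phi>)"
proof -
  obtain K where K: "\<And>a. norm (M a) \<le> norm a * K" "K > 0" using bounded_linear.pos_bounded[OF M] by blast
  show ?thesis
  proof (rule bounded_linear_intro[where K = "norm \<Phi> * K"])
    fix f1 f2 show "arens_act M \<Phi> (f1 + f2) = arens_act M \<Phi> f1 + arens_act M \<Phi> f2"
      by (rule blinfun_eqI) (simp add: arens_act_apply[OF M] blinfun.add_left blinfun.add_right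
          bounded_bilinear.add_left[OF bounded_bilinear_blinfun_compose])
  next
    fix r f show "arens_act M \<Phi> (r *\<^sub>R f) = r *\<^sub>R arens_act M \<Phi> f"
      by (rule blinfun_eqI) (simp add: arens_act_apply[OF M] blinfun.scaleR_left blinfun.scaleR_right
          bounded_bilinear.scaleR_left[OF bounded_bilinear_blinfun_compose])
  next
    fix f show "norm (arens_act M \<Phi> f) \<le> norm f * (norm \<Phi> * K)"
    proof (rule norm_blinfun_bound)
      fix a
      have "norm (blinfun_apply (arens_act M \<Phi> f) a) \<le> norm \<Phi> * norm (f o\<^sub>L M a)"
        unfolding arens_act_apply[OF M] by (rule norm_blinfun)
      also have "\<dots> \<le> norm \<Phi> * (norm f * (norm a * K))"
        by (intro mult_left_mono order_trans[OF norm_blinfun_compose]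
            mult_left_mono[OF K(1) norm_ge_zero]) simp
      finally show "norm (blinfun_apply (arens_act M \<Phi> f) a) \<le> norm f * (norm \<Phi> * K) * norm a"
        by (simp add: algebra_simps)
    qed (use K(2) in simp)
  qed
qed

lemma arens_act_Blinfun_apply:
  "bounded_linear M \<Longrightarrow>
    blinfun_apply (Blinfun (\<lambda>f. blinfun_apply \<Psi> (arens_act M \<Phi> f))) f = blinfun_apply \<Psi> (arens_act M \<Phi> f)"
  by (simp add: bounded_linear_Blinfun_apply bounded_linear_compose[OF blinfun.bounded_linear_right
        bounded_linear_arens_act])

lemma limitin_wstar_top_kappa_image:
  assumes "limitin wstar_top kappa T G"
  shows "limitin wstar_top (\<lambda>b. kappa (blinfun_apply L b)) (blinfun_apply (biadj L) T) G"
  unfolding limitin_wstar_top_iff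
proof
  fix f
  have "((\<lambda>b. blinfun_apply (kappa b) (f o\<^sub>L L)) \<longlongrightarrow> blinfun_apply T (f o\<^sub>L L)) G"
    using assms unfolding limitin_wstar_top_iff by blast
  then show "((\<lambda>b. blinfun_apply (kappa (blinfun_apply L b)) f) \<longlongrightarrow> blinfun_apply (blinfun_apply (biadj L) T) f) G"
    by simp
qed

lemma limitin_wstar_top_biadj_arens_act:
  assumes M: "bounded_linear M" and S: "limitin wstar_top kappa S F"
  shows "limitin wstar_top (\<lambda>a. blinfun_apply (biadj (M a)) T)
    (Blinfun (\<lambda>f. blinfun_apply S (arens_act M T f))) F"
  unfolding limitin_wstar_top_iff
proof
  fix f
  have "((\<lambda>a. blinfun_apply (kappa a) (arens_act M T f)) \<longlongrightarrow> blinfun_apply S (arens_act M T f)) F"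
    using S unfolding limitin_wstar_top_iff by blast
  then show "((\<lambda>a. blinfun_apply (blinfun_apply (biadj (M a)) T) f) \<longlongrightarrow>
      blinfun_apply (Blinfun (\<lambda>f. blinfun_apply S (arens_act M T f))) f) F"
    by (simp add: arens_act_Blinfun_apply[OF M] arens_act_apply[OF M])
qed

text \<open>The definite description in \<open>arens_left\<close> is determined because bounded nets converging to
  \<open>S\<close> and \<open>T\<close> exist (\<open>bnd_net_exists\<close>) and weak* limits are unique.\<close>
lemma arens_left_eq:
  fixes S T :: "'a::real_normed_algebra bidual"
  shows "arens_left S T = Blinfun (\<lambda>f. blinfun_apply S (arens_act blinfun_mult_right T f))"
    (is "_ = ?R")
proof -
  have lim: "limitin wstar_top (\<lambda>a. wlim G (\<lambda>b. kappa (a * b))) ?R F"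
    if "bnd_net F S" "bnd_net G T" for F G
  proof -
    have "wlim G (\<lambda>b. kappa (a * b)) = blinfun_apply (biadj (blinfun_mult_right a)) T" for a
      using limitin_wstar_top_kappa_image[of T G "blinfun_mult_right a"] that(2)
      by (intro wlim_eqI) (auto simp: bnd_net_def)
    then show ?thesis
      using limitin_wstar_top_biadj_arens_act[OF bounded_linear_blinfun_mult_right, of S F T] that(1)
      by (simp add: bnd_net_def)
  qed
  obtain F G where FG: "bnd_net F S" "bnd_net G T" using bnd_net_exists by metis
  show ?thesis unfolding arens_left_def
  proof (rule the_equality)
    fix R assume "\<forall>F G. bnd_net F S \<and> bnd_net G T \<longrightarrow> limitin wstar_top (\<lambda>a. wlim G (\<lambda>b. kappa (a * b))) R F"
    then have "limitin wstar_top (\<lambda>a. wlim G (\<lambda>b. kappa (a * b))) R F" using FG by blast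
    then show "R = ?R" using lim[OF FG] FG(1) by (auto simp: bnd_net_def intro: limitin_wstar_top_unique)
  qed (use lim in blast)
qed

lemma arens_right_eq:
  fixes S T :: "'a::real_normed_algebra bidual"
  shows "arens_right S T = Blinfun (\<lambda>f. blinfun_apply T (arens_act blinfun_mult_left S f))"
    (is "_ = ?R")
proof -
  have lim: "limitin wstar_top (\<lambda>b. wlim F (\<lambda>a. kappa (a * b))) ?R G"
    if "bnd_net F S" "bnd_net G T" for F G
  proof -
    have "wlim F (\<lambda>a. kappa (a * b)) = blinfun_apply (biadj (blinfun_mult_left b)) S" for b
      using limitin_wstar_top_kappa_image[of S F "blinfun_mult_left b"] that(1)
      by (intro wlim_eqI) (auto simp: bnd_net_def)
    then show ?thesis
      using limitin_wstar_top_biadj_arens_act[OF bounded_linear_blinfun_mult_left, of T G S] that(2)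
      by (simp add: bnd_net_def)
  qed
  obtain F G where FG: "bnd_net F S" "bnd_net G T" using bnd_net_exists by metis
  show ?thesis unfolding arens_right_def
  proof (rule the_equality)
    fix R assume "\<forall>F G. bnd_net F S \<and> bnd_net G T \<longrightarrow> limitin wstar_top (\<lambda>b. wlim F (\<lambda>a. kappa (a * b))) R G"
    then have "limitin wstar_top (\<lambda>b. wlim F (\<lambda>a. kappa (a * b))) R G" using FG by blast
    then show "R = ?R" using lim[OF FG] FG(2) by (auto simp: bnd_net_def intro: limitin_wstar_top_unique)
  qed (use lim in blast)
qed

lemma arens_left_apply:
  "blinfun_apply (arens_left S T) f = blinfun_apply S (arens_act blinfun_mult_right T f)"
  by (simp add: arens_left_eq arens_act_Blinfun_apply[OF bounded_linear_blinfun_mult_right])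

lemma arens_right_apply:
  "blinfun_apply (arens_right S T) f = blinfun_apply T (arens_act blinfun_mult_left S f)"
  by (simp add: arens_right_eq arens_act_Blinfun_apply[OF bounded_linear_blinfun_mult_left])

section \<open>The representation on the bidual\<close>

lemma gamma_inj: "gamma a = gamma b \<Longrightarrow> a = b"
  unfolding gamma_def by (rule blinfun_eqI) (metis kappa_inj)

lemma phihat_eqI: "phitilde \<phi> S = gamma c \<Longrightarrow> phihat \<phi> S = c"
  unfolding phihat_def by (rule the_equality) (auto dest: gamma_inj)

lemma phihat_kappa: "phihat \<phi> (kappa a) = \<phi> a"
  by (rule phihat_eqI[OF phitilde_kappa])

lemma gamma_if_range_kappa:
  fixes F :: "'x::real_normed_vector \<Rightarrow> 'x bidual"
  assumes F: "bounded_linear F" and range: "\<And>x. \<exists>y. F x = kappa y"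
  obtains c where "F = gamma c"
proof -
  define c where "c x = (SOME y. F x = kappa y)" for x
  have c: "kappa (c x) = F x" for x unfolding c_def by (rule someI_ex[OF range, THEN sym])
  have "bounded_linear c"
  proof
    show "c (x + y) = c x + c y" for x y
      by (rule kappa_inj) (simp add: c kappa_add linear_add[OF bounded_linear.linear[OF F]])
    show "c (r *\<^sub>R x) = r *\<^sub>R c x" for r x
      by (rule kappa_inj) (simp add: c kappa_scaleR linear_scale[OF bounded_linear.linear[OF F]])
    obtain K where "\<And>x. norm (F x) \<le> norm x * K" using bounded_linear.bounded[OF F] by blast
    then show "\<exists>K. \<forall>x. norm (c x) \<le> norm x * K" by (metis c norm_kappa)
  qed
  then have "F = gamma (Blinfun c)" by (auto simp: gamma_def bounded_linear_Blinfun_apply c)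
  then show ?thesis by (rule that)
qed

lemma phitilde_range_gamma_iff_weakly_compact:
  fixes \<phi> :: "'a::real_normed_vector \<Rightarrow>\<^sub>L ('x::real_normed_vector \<Rightarrow>\<^sub>L 'x)"
  shows "(\<forall>S. \<exists>c. phitilde \<phi> S = gamma c) \<longleftrightarrow> (\<forall>x. weakly_compact (ev x o\<^sub>L \<phi>))"
proof -
  have "(\<exists>c. phitilde \<phi> S = gamma c) \<longleftrightarrow> (\<forall>x. \<exists>y. phitilde \<phi> S x = kappa y)" for S
    using gamma_if_range_kappa[OF bounded_linear_phitilde] by (metis gamma_def)
  then show ?thesis by (auto simp: weakly_compact_iff_biadj_range_kappa phitilde_eq_biadj)
qed

context
  fixes \<phi> :: "'a::real_normed_vector \<Rightarrow>\<^sub>L ('x::real_normed_vector \<Rightarrow>\<^sub>L 'x)"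
  assumes range_gamma: "\<And>S. \<exists>c. phitilde \<phi> S = gamma c"
begin

lemma phitilde_eq_gamma_phihat: "phitilde \<phi> S = gamma (phihat \<phi> S)"
  using range_gamma[of S] phihat_eqI by metis

lemma bidual_apply_orbit_functional:
  "blinfun_apply S (g o\<^sub>L (ev x o\<^sub>L \<phi>)) = blinfun_apply g (blinfun_apply (phihat \<phi> S) x)"
  using arg_cong[OF phitilde_eq_gamma_phihat[of S], of "\<lambda>F. blinfun_apply (F x) g"]
  by (simp add: phitilde_apply)

text \<open>A functional annihilating the essential space of \<open>\<phi>\<close> kills every orbit map \<open>ev x \<circ> \<phi>\<close>,
  hence, by the previous lemma, the range of every \<open>phihat \<phi> S\<close>.\<close>
lemma ess_space_phihat: "ess_space (blinfun_apply \<phi>) = ess_space (phihat \<phi>)"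
proof
  show "ess_space (blinfun_apply \<phi>) \<subseteq> ess_space (phihat \<phi>)"
    unfolding ess_space_def
  proof (intro closure_mono span_mono subsetI)
    fix y assume "y \<in> {blinfun_apply (blinfun_apply \<phi> b) x |b x. True}"
    then obtain b x where "y = blinfun_apply (phihat \<phi> (kappa b)) x" by (auto simp: phihat_kappa)
    then show "y \<in> {blinfun_apply (phihat \<phi> S) x |S x. True}" by blast
  qed
next
  define A where "A = {blinfun_apply (blinfun_apply \<phi> b) x |b x. True}"
  show "ess_space (phihat \<phi>) \<subseteq> ess_space (blinfun_apply \<phi>)"
    unfolding ess_space_def A_def[symmetric]
  proof (rule closure_span_subset_if_annihilated)
    fix f :: "'x \<Rightarrow>\<^sub>L real" and y assume f: "\<And>a. a \<in> A \<Longrightarrow> blinfun_apply f a = 0"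
      and "y \<in> {blinfun_apply (phihat \<phi> S) x |S x. True}"
    then obtain S x where y: "y = blinfun_apply (phihat \<phi> S) x" by blast
    have "blinfun_apply (\<phi> a) x \<in> A" for a unfolding A_def by blast
    then have "f o\<^sub>L (ev x o\<^sub>L \<phi>) = 0" by (intro blinfun_eqI) (simp add: f)
    then show "blinfun_apply f y = 0" using bidual_apply_orbit_functional[of S f x] by (simp add: y)
  qed
qed

end

context
  fixes \<phi> :: "'a::real_normed_algebra \<Rightarrow>\<^sub>L ('x::real_normed_vector \<Rightarrow>\<^sub>L 'x)"
  assumes mult: "\<And>a b. \<phi> (a * b) = \<phi> a o\<^sub>L \<phi> b"
    and range_gamma: "\<And>S. \<exists>c. phitilde \<phi> S = gamma c"
begin

lemma phihat_arens_left: "phihat \<phi> (arens_left S T) = phihat \<phi> S o\<^sub>L phihat \<phi> T"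
proof (rule phihat_eqI, intro ext blinfun_eqI)
  fix x and g :: "'x \<Rightarrow>\<^sub>L real"
  have "arens_act blinfun_mult_right T (g o\<^sub>L (ev x o\<^sub>L \<phi>)) = g o\<^sub>L (ev (blinfun_apply (phihat \<phi> T) x) o\<^sub>L \<phi>)"
  proof (rule blinfun_eqI)
    fix a
    have "g o\<^sub>L (ev x o\<^sub>L \<phi>) o\<^sub>L blinfun_mult_right a = (g o\<^sub>L \<phi> a) o\<^sub>L (ev x o\<^sub>L \<phi>)"
      by (rule blinfun_eqI) (simp add: mult)
    then show "blinfun_apply (arens_act blinfun_mult_right T (g o\<^sub>L (ev x o\<^sub>L \<phi>))) a
        = blinfun_apply (g o\<^sub>L (ev (blinfun_apply (phihat \<phi> T) x) o\<^sub>L \<phi>)) a"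
      by (simp add: arens_act_apply[OF bounded_linear_blinfun_mult_right]
          bidual_apply_orbit_functional[OF range_gamma])
  qed
  then have "blinfun_apply (phitilde \<phi> (arens_left S T) x) g
      = blinfun_apply S (g o\<^sub>L (ev (blinfun_apply (phihat \<phi> T) x) o\<^sub>L \<phi>))"
    by (simp add: phitilde_apply arens_left_apply)
  then show "blinfun_apply (phitilde \<phi> (arens_left S T) x) g
      = blinfun_apply (gamma (phihat \<phi> S o\<^sub>L phihat \<phi> T) x) g"
    by (simp add: bidual_apply_orbit_functional[OF range_gamma])
qed

lemma phihat_arens_right: "phihat \<phi> (arens_right S T) = phihat \<phi> S o\<^sub>L phihat \<phi> T"
proof (rule phihat_eqI, intro ext blinfun_eqI)
  fix x and g :: "'x \<Rightarrow>\<^sub>L real"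
  have "arens_act blinfun_mult_left S (g o\<^sub>L (ev x o\<^sub>L \<phi>)) = (g o\<^sub>L phihat \<phi> S) o\<^sub>L (ev x o\<^sub>L \<phi>)"
  proof (rule blinfun_eqI)
    fix b
    have "g o\<^sub>L (ev x o\<^sub>L \<phi>) o\<^sub>L blinfun_mult_left b = g o\<^sub>L (ev (blinfun_apply (\<phi> b) x) o\<^sub>L \<phi>)"
      by (rule blinfun_eqI) (simp add: mult)
    then show "blinfun_apply (arens_act blinfun_mult_left S (g o\<^sub>L (ev x o\<^sub>L \<phi>))) b
        = blinfun_apply ((g o\<^sub>L phihat \<phi> S) o\<^sub>L (ev x o\<^sub>L \<phi>)) b"
      by (simp add: arens_act_apply[OF bounded_linear_blinfun_mult_left]
          bidual_apply_orbit_functional[OF range_gamma])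
  qed
  then have "blinfun_apply (phitilde \<phi> (arens_right S T) x) g
      = blinfun_apply T ((g o\<^sub>L phihat \<phi> S) o\<^sub>L (ev x o\<^sub>L \<phi>))"
    by (simp add: phitilde_apply arens_right_apply)
  then show "blinfun_apply (phitilde \<phi> (arens_right S T) x) g
      = blinfun_apply (gamma (phihat \<phi> S o\<^sub>L phihat \<phi> T) x) g"
    by (simp add: bidual_apply_orbit_functional[OF range_gamma])
qed

end

theorem theorem2p5:
  fixes \<phi> :: "'a::{banach, real_normed_algebra} \<Rightarrow>\<^sub>L ('x::banach \<Rightarrow>\<^sub>L 'x)"
  assumes mult: "\<And>a b. \<phi> (a * b) = \<phi> a o\<^sub>L \<phi> b"
  shows "((\<forall>S. \<exists>c. phitilde \<phi> S = gamma c) \<longleftrightarrow> (\<forall>x. weakly_compact (ev x o\<^sub>L \<phi>)))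
    \<and> ((\<forall>S. \<exists>c. phitilde \<phi> S = gamma c) \<longrightarrow>
         ess_space (blinfun_apply \<phi>) = ess_space (phihat \<phi>)
       \<and> (\<forall>S T. phihat \<phi> (arens_left S T) = phihat \<phi> S o\<^sub>L phihat \<phi> T)
       \<and> (\<forall>S T. phihat \<phi> (arens_right S T) = phihat \<phi> S o\<^sub>L phihat \<phi> T)
       \<and> (\<forall>a. phihat \<phi> (kappa a) = \<phi> a))"
  using phitilde_range_gamma_iff_weakly_compact ess_space_phihat
    phihat_arens_left[OF mult] phihat_arens_right[OF mult] phihat_kappa
  by blast

end
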